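(* Let $\mathfrak L=\mathbb V\oplus\mathbb W$ be a color gLt-algebra admitting a quasi-multiplicative basis $\mathfrak B=\{e_i\}_{i\in I}$ of $\mathbb W\neq0$ which is $\mu$-quasi-multiplicative. If $\mathfrak L$ is centerless (i.e. $\mathcal Z(\mathfrak L)=0$) and $\mathbb V$ is tight, then $\mathfrak L=\bigoplus_k\mathfrak J_k$ is the direct sum of the family of its minimal color gLt-ideals, each one admitting a $\mu$-quasi-multiplicative basis inherited by the one of $\mathfrak L$.
   Context: Let $\mathbb F$ be a field, $\mathbb G$ an abelian group, $n\ge 2$, and $\epsilon:\mathbb G\times\mathbb G\to\mathbb F\setminus\{0\}$ a bicharacter ($\epsilon(k,g+h)=\epsilon(k,g)\epsilon(k,h)$, $\epsilon(g+h,k)=\epsilon(g,k)\epsilon(h,k)$, $\epsilon(g,h)\epsilon(h,g)=1$). A graded $n$-ary algebra is a $\mathbb G$-graded vector space $\mathfrak L=\bigoplus_{g\in\mathbb G}\mathfrak L_g$ with an $n$-linear map $\langle\cdot,\dots,\cdot\rangle:\mathfrak L^n\to\mathfrak L$ such that $\langle\mathfrak L_{g_1},\dots,\mathfrak L_{g_n}\rangle\subset\mathfrak L_{g_1+\dots+g_n}$. For $\sigma\in\mathbb S_n$ write $\langle x_1,\dots,x_n\rangle_\sigma:=\langle x_{\sigma(1)},\dots,x_{\sigma(n)}\rangle$; for subsets $A_1,\dots,A_n$, $\langle A_1,\dots,A_n\rangle_\sigma$ denotes the linear span of all $\langle x_1,\dots,x_n\rangle_\sigma$ with $x_r\in A_r$.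 A color gLt-algebra is a graded $n$-ary algebra satisfying, for each $k=1,\dots,n$ and fixed scalars $\alpha^{\sigma_1,\sigma_2}_{i,j,k}\in\mathbb F$, the color version (each term on the right multiplied by the product of values of $\epsilon$ on the degrees of the homogeneous arguments transposed in passing from the left-hand order to the order of that term) of the identity $\langle y_1,\dots,y_{k-1},\langle x_1,\dots,x_n\rangle,y_k,\dots,y_{n-1}\rangle=\sum_{1\le i,j\le n,\,\sigma_1\in\mathbb S_n,\,\sigma_2\in\mathbb S_{n-1}}\alpha^{\sigma_1,\sigma_2}_{i,j,k}\langle x_{\sigma_1(1)},\dots,x_{\sigma_1(i-1)},\langle y_{\sigma_2(1)},\dots,y_{\sigma_2(j-1)},x_{\sigma_1(i)},y_{\sigma_2(j)},\dots,y_{\sigma_2(n-1)}\rangle,x_{\sigma_1(i+1)},\dots,x_{\sigma_1(n)}\rangle$. A $\mathbb G$-graded subspace $\mathcal I\subset\mathfrak L$ is a color gLt-ideal if $\langle\mathcal I,\mathfrak L,\dots,\mathfrak L\rangle_\sigma\subset\mathcal I$ for every $\sigma\in\mathbb S_n$. The center is $\mathcal Z(\mathfrak L):=\{x\in\mathfrak L:\langle x,\mathfrak L,\dots,\mathfrak L\rangle_\sigma=0\text{ for all }\sigma\in\mathbb S_n\}$. $\mathfrak L$ admits a quasi-multiplicative basis if $\mathfrak L=\mathbb V\oplus\mathbb W$ with $\mathbb V$, $\mathbb W\ne0$ graded subspaces and $\mathfrak B=\{e_i\}_{i\in I}$ a basis of homogeneous elements of $\mathbb W$ such that: (1) for $i_1,\dots,i_n\in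 I$, either $\langle e_{i_1},\dots,e_{i_n}\rangle\in\mathbb Fe_j$ for some $j\in I$ or $\langle e_{i_1},\dots,e_{i_n}\rangle\in\mathbb V$; (2) for $0<k<n$, $i_1,\dots,i_k\in I$ and $\sigma\in\mathbb S_n$, $\langle e_{i_1},\dots,e_{i_k},\mathbb V,\dots,\mathbb V\rangle_\sigma\subset\mathbb Fe_{j_\sigma}$ for some $j_\sigma\in I$; (3) either $\langle\mathbb V,\dots,\mathbb V\rangle\subset\mathbb Fe_j$ for some $j\in I$ or $\langle\mathbb V,\dots,\mathbb V\rangle\subset\mathbb V$. A color gLt-ideal $\mathfrak S$ admits a basis inherited by the one of $\mathfrak L$ if $\mathfrak S=\mathbb V_{\mathfrak S}\oplus\mathbb W_{\mathfrak S}$ with $\mathbb V_{\mathfrak S}$ a graded subspace of $\mathbb V$ and $0\ne\mathbb W_{\mathfrak S}$ a graded subspace of $\mathbb W$ admitting a subset $\mathfrak B'\subset\mathfrak B$ as a basis (then $\mathfrak S$ is itself a color gLt-algebra with quasi-multiplicative basis $\mathfrak B'$ of $\mathbb W_{\mathfrak S}$). A color gLt-algebra with a quasi-multiplicative basis is minimal if its only nonzero color gLt-ideal admitting a basis inherited by its own is itself; a minimal color gLt-ideal of $\mathfrak L$ is a color gLt-ideal with an inherited basis which, as such an algebra, is minimal. Index maps (defined for any such algebra, here written for $\mathfrak L$): let $v$ be a symbol not in $I$, $\mathfrak I:=I\,\dot\cup\,\{v\}$; for each $j\in\mathfrak I$ take a new symbol $\overline j$, $\overline I:=\{\overline i:i\in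 I\}$, $\overline{\mathfrak I}:=\overline I\,\dot\cup\,\{\overline v\}$; set $\overline{(\overline j)}:=j$. Put $u_j:=e_j$ for $j\in I$ and $u_v:=\mathbb V$. For $\sigma\in\mathbb S_n$ and $(j_1,\dots,j_n)\in\mathfrak I^n$ let $a_\sigma(j_1,\dots,j_n)=\{r\}$ if $r\in I$ and $0\ne\langle u_{j_1},\dots,u_{j_n}\rangle_\sigma\subset\mathbb Fe_r$, $=\{v\}$ if $0\ne\langle u_{j_1},\dots,u_{j_n}\rangle_\sigma\subset\mathbb V$, and $=\emptyset$ otherwise. For $j,j_2,\dots,j_n\in\mathfrak I$ let $b_\sigma(j,\overline j_2,\dots,\overline j_n):=\{x\in\mathfrak I: a_\sigma(x,j_2,\dots,j_n)=\{j\}\}$. Define $\mu$ on $(\mathfrak I\,\dot\cup\,\overline{\mathfrak I})\times(\mathfrak I^{n-1}\,\dot\cup\,\overline{\mathfrak I}^{n-1})$ with values subsets of $\mathfrak I$ by: $\mu(j,j_1,\dots,j_{n-1})=\bigcup_{\sigma\in\mathbb S_n}a_\sigma(j,j_1,\dots,j_{n-1})$ for $j,j_1,\dots,j_{n-1}\in\mathfrak I$; $\mu(j,\overline j_1,\dots,\overline j_{n-1})=\bigcup_{\sigma\in\mathbb S_n}b_\sigma(j,\overline j_1,\dots,\overline j_{n-1})$ for $j,j_1,\dots,j_{n-1}\in\mathfrak I$; $\mu(\overline j,j_1,\dots,j_{n-1})=\bigcup_{1\le k\le n-1,\ \sigma\in\mathbb S_n}b_\sigma(j_k,\overline j,\overline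 j_1,\dots,\overline j_{k-1},\overline j_{k+1},\dots,\overline j_{n-1})$ for $j,j_1,\dots,j_{n-1}\in\mathfrak I$; and $\mu(\overline j,\overline j_1,\dots,\overline j_{n-1})=\emptyset$. $\mathbb V$ is tight if $\mathbb V=\{0\}$ or $\mathbb V=\sum\{\mathbb F\langle e_{i_1},\dots,e_{i_n}\rangle: i_1,\dots,i_n\in I,\ \mu(i_1,\dots,i_n)=\{v\}\}$. The basis $\mathfrak B$ is $\mu$-quasi-multiplicative if whenever $i\in I$, $k_1\in\mathfrak I\,\dot\cup\,\overline{\mathfrak I}$ and $(k_2,\dots,k_n)\in\mathfrak I^{n-1}\,\dot\cup\,\overline{\mathfrak I}^{n-1}$ satisfy $i\in\mu(k_1,k_2,\dots,k_n)$, then $e_i\in\langle w_{k_1},\dots,w_{k_n}\rangle_\sigma$ (linear span) for some $\sigma\in\mathbb S_n$, where $w_k:=e_j$ if $k\in\{j,\overline j\}$ with $j\in I$, and $w_k:=\mathbb V$ if $k\in\{v,\overline v\}$. *)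

theory Defs
  imports Complex_Main "HOL-Combinatorics.Permutations"
begin

(* An n-ary product is a function mul :: 'v list \<Rightarrow> 'v applied to lists of length n.
   All positions / indices are 0-based. A permutation of {1..n} is a function
   \<sigma> permutes {..<n}. *)

definition bicharacter :: "('g::ab_group_add \<Rightarrow> 'g \<Rightarrow> 'f::field) \<Rightarrow> bool" where
  "bicharacter eps \<longleftrightarrow>
     (\<forall>g h. eps g h \<noteq> 0) \<and>
     (\<forall>k g h. eps k (g + h) = eps k g * eps k h) \<and>
     (\<forall>k g h. eps (g + h) k = eps g k * eps h k) \<and>
     (\<forall>g h. eps g h * eps h g = 1)"

definition line :: "('f \<Rightarrow> 'v \<Rightarrow> 'v) \<Rightarrow> 'v \<Rightarrow> 'v set" where
  "line scale e = {scale c e | c. True}"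

definition setsum :: "'v::ab_group_add set \<Rightarrow> 'v set \<Rightarrow> 'v set" where
  "setsum A B = {a + b | a b. a \<in> A \<and> b \<in> B}"

definition graded_space :: "('f::field \<Rightarrow> 'v::ab_group_add \<Rightarrow> 'v) \<Rightarrow> 'v set \<Rightarrow> ('g \<Rightarrow> 'v set) \<Rightarrow> bool" where
  "graded_space scale L Lg \<longleftrightarrow>
     (\<forall>g. module.subspace scale (Lg g) \<and> Lg g \<subseteq> L) \<and>
     L = module.span scale (\<Union>g. Lg g) \<and>
     (\<forall>S x. finite S \<longrightarrow> (\<forall>g\<in>S. x g \<in> Lg g) \<longrightarrow> sum x S = 0 \<longrightarrow> (\<forall>g\<in>S. x g = 0))"

definition graded_subspace :: "('f::field \<Rightarrow> 'v::ab_group_add \<Rightarrow> 'v) \<Rightarrow> ('g \<Rightarrow> 'v set) \<Rightarrow> 'v set \<Rightarrow> bool" where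
  "graded_subspace scale Lg U \<longleftrightarrow>
     module.subspace scale U \<and> U = module.span scale (\<Union>g. U \<inter> Lg g)"

definition graded_nary_algebra ::
  "('f::field \<Rightarrow> 'v::ab_group_add \<Rightarrow> 'v) \<Rightarrow> nat \<Rightarrow> ('v list \<Rightarrow> 'v) \<Rightarrow> 'v set \<Rightarrow> ('g::ab_group_add \<Rightarrow> 'v set) \<Rightarrow> bool" where
  "graded_nary_algebra scale n mul L Lg \<longleftrightarrow>
     graded_space scale L Lg \<and>
     (\<forall>xs. length xs = n \<longrightarrow> set xs \<subseteq> L \<longrightarrow> mul xs \<in> L) \<and>
     (\<forall>xs p a b c. length xs = n \<longrightarrow> set xs \<subseteq> L \<longrightarrow> p < n \<longrightarrow> a \<in> L \<longrightarrow> b \<in> L \<longrightarrow>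
         mul (xs[p := a + b]) = mul (xs[p := a]) + mul (xs[p := b]) \<and>
         mul (xs[p := scale c a]) = scale c (mul (xs[p := a]))) \<and>
     (\<forall>xs gs. length xs = n \<longrightarrow> (\<forall>r<n. xs ! r \<in> Lg (gs r)) \<longrightarrow>
         mul xs \<in> Lg (\<Sum>r<n. gs r))"

definition before :: "'a list \<Rightarrow> 'a \<Rightarrow> 'a \<Rightarrow> bool" where
  "before xs a b \<longleftrightarrow> (\<exists>p q. p < q \<and> q < length xs \<and> xs ! p = a \<and> xs ! q = b)"

definition color_sign :: "('g \<Rightarrow> 'g \<Rightarrow> 'f::field) \<Rightarrow> ('a \<Rightarrow> 'g) \<Rightarrow> 'a list \<Rightarrow> 'a list \<Rightarrow> 'f" where
  "color_sign eps deg ls rs =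
     (\<Prod>(a, b) \<in> {(a, b). before ls a b \<and> before rs b a}. eps (deg a) (deg b))"

(* Argument tags: Inl r = x_r, Inr r = y_r (0-based).  Outer insertion position k,
   inner term data i, j, \<sigma>1, \<sigma>2 (0-based). *)
definition gLt_lhs_order :: "nat \<Rightarrow> nat \<Rightarrow> (nat + nat) list" where
  "gLt_lhs_order n k = map Inr [0..<k] @ map Inl [0..<n] @ map Inr [k..<n - 1]"

definition gLt_rhs_order ::
  "nat \<Rightarrow> nat \<Rightarrow> nat \<Rightarrow> (nat \<Rightarrow> nat) \<Rightarrow> (nat \<Rightarrow> nat) \<Rightarrow> (nat + nat) list" where
  "gLt_rhs_order n i j \<sigma>1 \<sigma>2 =
     (let xp = map \<sigma>1 [0..<n]; yp = map \<sigma>2 [0..<n - 1] in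
      map Inl (take i xp) @ map Inr (take j yp) @ [Inl (xp ! i)] @
      map Inr (drop j yp) @ map Inl (drop (Suc i) xp))"

definition gLt_term ::
  "('v list \<Rightarrow> 'v) \<Rightarrow> nat \<Rightarrow> 'v list \<Rightarrow> 'v list \<Rightarrow> nat \<Rightarrow> nat \<Rightarrow> (nat \<Rightarrow> nat) \<Rightarrow> (nat \<Rightarrow> nat) \<Rightarrow> 'v" where
  "gLt_term mul n xs ys i j \<sigma>1 \<sigma>2 =
     (let xp = map (\<lambda>p. xs ! \<sigma>1 p) [0..<n]; yp = map (\<lambda>p. ys ! \<sigma>2 p) [0..<n - 1];
          inner = mul (take j yp @ [xp ! i] @ drop j yp) in
      mul (take i xp @ [inner] @ drop (Suc i) xp))"

definition color_gLt_algebra ::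
  "('f::field \<Rightarrow> 'v::ab_group_add \<Rightarrow> 'v) \<Rightarrow> nat \<Rightarrow> ('v list \<Rightarrow> 'v) \<Rightarrow> ('g::ab_group_add \<Rightarrow> 'g \<Rightarrow> 'f)
    \<Rightarrow> 'v set \<Rightarrow> ('g \<Rightarrow> 'v set) \<Rightarrow> bool" where
  "color_gLt_algebra scale n mul eps L Lg \<longleftrightarrow>
     graded_nary_algebra scale n mul L Lg \<and>
     (\<exists>\<alpha> :: nat \<Rightarrow> nat \<Rightarrow> nat \<Rightarrow> (nat \<Rightarrow> nat) \<Rightarrow> (nat \<Rightarrow> nat) \<Rightarrow> 'f.
        \<forall>k<n. \<forall>xs ys gx gy.
          length xs = n \<longrightarrow> length ys = n - 1 \<longrightarrow>
          (\<forall>r<n. xs ! r \<in> Lg (gx r)) \<longrightarrow> (\<forall>r<n - 1. ys ! r \<in> Lg (gy r)) \<longrightarrow>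
          mul (take k ys @ [mul xs] @ drop k ys) =
          (\<Sum>i<n. \<Sum>j<n. \<Sum>\<sigma>1\<in>{\<sigma>. \<sigma> permutes {..<n}}. \<Sum>\<sigma>2\<in>{\<sigma>. \<sigma> permutes {..<n - 1}}.
             scale (\<alpha> i j k \<sigma>1 \<sigma>2 *
                    color_sign eps (case_sum gx gy) (gLt_lhs_order n k) (gLt_rhs_order n i j \<sigma>1 \<sigma>2))
                   (gLt_term mul n xs ys i j \<sigma>1 \<sigma>2)))"

definition gen_prod ::
  "('f::field \<Rightarrow> 'v::ab_group_add \<Rightarrow> 'v) \<Rightarrow> nat \<Rightarrow> ('v list \<Rightarrow> 'v) \<Rightarrow> (nat \<Rightarrow> nat) \<Rightarrow> 'v set list \<Rightarrow> 'v set" where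
  "gen_prod scale n mul \<sigma> As = module.span scale
     {mul (map (\<lambda>p. xs ! \<sigma> p) [0..<n]) | xs. length xs = n \<and> (\<forall>r<n. xs ! r \<in> As ! r)}"

definition center ::
  "('f::field \<Rightarrow> 'v::ab_group_add \<Rightarrow> 'v) \<Rightarrow> nat \<Rightarrow> ('v list \<Rightarrow> 'v) \<Rightarrow> 'v set \<Rightarrow> 'v set" where
  "center scale n mul L = {x \<in> L. \<forall>\<sigma>. \<sigma> permutes {..<n} \<longrightarrow>
      gen_prod scale n mul \<sigma> ({x} # replicate (n - 1) L) = {0}}"

definition gLt_ideal ::
  "('f::field \<Rightarrow> 'v::ab_group_add \<Rightarrow> 'v) \<Rightarrow> nat \<Rightarrow> ('v list \<Rightarrow> 'v) \<Rightarrow> 'v set \<Rightarrow> ('g \<Rightarrow> 'v set) \<Rightarrow> 'v set \<Rightarrow> bool" where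
  "gLt_ideal scale n mul L Lg I \<longleftrightarrow>
     I \<subseteq> L \<and> graded_subspace scale Lg I \<and>
     (\<forall>\<sigma>. \<sigma> permutes {..<n} \<longrightarrow> gen_prod scale n mul \<sigma> (I # replicate (n - 1) L) \<subseteq> I)"

definition quasi_mult_basis ::
  "('f::field \<Rightarrow> 'v::ab_group_add \<Rightarrow> 'v) \<Rightarrow> nat \<Rightarrow> ('v list \<Rightarrow> 'v) \<Rightarrow> 'v set \<Rightarrow> ('g \<Rightarrow> 'v set)
    \<Rightarrow> 'v set \<Rightarrow> 'v set \<Rightarrow> bool" where
  "quasi_mult_basis scale n mul L Lg V B \<longleftrightarrow>
     V \<subseteq> L \<and> graded_subspace scale Lg V \<and>
     B \<subseteq> L \<and> B \<noteq> {} \<and> \<not> module.dependent scale B \<and> (\<forall>e\<in>B. \<exists>g. e \<in> Lg g) \<and>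
     L = setsum V (module.span scale B) \<and> V \<inter> module.span scale B = {0} \<and>
     (\<forall>es. length es = n \<longrightarrow> set es \<subseteq> B \<longrightarrow>
         (\<exists>e\<in>B. mul es \<in> line scale e) \<or> mul es \<in> V) \<and>
     (\<forall>k es \<sigma>. 0 < k \<longrightarrow> k < n \<longrightarrow> length es = k \<longrightarrow> set es \<subseteq> B \<longrightarrow> \<sigma> permutes {..<n} \<longrightarrow>
         (\<exists>e\<in>B. gen_prod scale n mul \<sigma> (map (\<lambda>x. {x}) es @ replicate (n - k) V) \<subseteq> line scale e)) \<and>
     ((\<exists>e\<in>B. gen_prod scale n mul id (replicate n V) \<subseteq> line scale e) \<or>
      gen_prod scale n mul id (replicate n V) \<subseteq> V)"

(* Index maps. Indices: Some e (e \<in> B) for the basis element e, None for the symbol v.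
   A bar on an index is recorded by a boolean flag (True = barred). *)
definition idx_set :: "'v set \<Rightarrow> 'v option set" where
  "idx_set B = Some ` B \<union> {None}"

definition u_of :: "'v set \<Rightarrow> 'v option \<Rightarrow> 'v set" where
  "u_of V j = (case j of Some e \<Rightarrow> {e} | None \<Rightarrow> V)"

definition a_map ::
  "('f::field \<Rightarrow> 'v::ab_group_add \<Rightarrow> 'v) \<Rightarrow> nat \<Rightarrow> ('v list \<Rightarrow> 'v) \<Rightarrow> 'v set \<Rightarrow> 'v set
    \<Rightarrow> (nat \<Rightarrow> nat) \<Rightarrow> 'v option list \<Rightarrow> 'v option set" where
  "a_map scale n mul V B \<sigma> js =
     (let P = gen_prod scale n mul \<sigma> (map (u_of V) js) in
      {Some r | r. r \<in> B \<and> P \<noteq> {0} \<and> P \<subseteq> line scale r} \<union>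
      {None | x::unit. P \<noteq> {0} \<and> P \<subseteq> V})"

definition b_map ::
  "('f::field \<Rightarrow> 'v::ab_group_add \<Rightarrow> 'v) \<Rightarrow> nat \<Rightarrow> ('v list \<Rightarrow> 'v) \<Rightarrow> 'v set \<Rightarrow> 'v set
    \<Rightarrow> (nat \<Rightarrow> nat) \<Rightarrow> 'v option \<Rightarrow> 'v option list \<Rightarrow> 'v option set" where
  "b_map scale n mul V B \<sigma> j js =
     {x \<in> idx_set B. a_map scale n mul V B \<sigma> (x # js) = {j}}"

(* mu scale n mul V B b1 j b2 js  =  \<mu>(k_1, k_2, ..., k_n) where k_1 = j (barred iff b1)
   and (k_2,...,k_n) = js (all barred iff b2) *)
definition mu_map ::
  "('f::field \<Rightarrow> 'v::ab_group_add \<Rightarrow> 'v) \<Rightarrow> nat \<Rightarrow> ('v list \<Rightarrow> 'v) \<Rightarrow> 'v set \<Rightarrow> 'v set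
    \<Rightarrow> bool \<Rightarrow> 'v option \<Rightarrow> bool \<Rightarrow> 'v option list \<Rightarrow> 'v option set" where
  "mu_map scale n mul V B b1 j b2 js =
     (if \<not> b1 \<and> \<not> b2 then
        (\<Union>\<sigma>\<in>{\<sigma>. \<sigma> permutes {..<n}}. a_map scale n mul V B \<sigma> (j # js))
      else if \<not> b1 \<and> b2 then
        (\<Union>\<sigma>\<in>{\<sigma>. \<sigma> permutes {..<n}}. b_map scale n mul V B \<sigma> j js)
      else if b1 \<and> \<not> b2 then
        (\<Union>k<n - 1. \<Union>\<sigma>\<in>{\<sigma>. \<sigma> permutes {..<n}}.
            b_map scale n mul V B \<sigma> (js ! k) (j # take k js @ drop (Suc k) js))
      else {})"

definition tight ::
  "('f::field \<Rightarrow> 'v::ab_group_add \<Rightarrow> 'v) \<Rightarrow> nat \<Rightarrow> ('v list \<Rightarrow> 'v) \<Rightarrow> 'v set \<Rightarrow> 'v set \<Rightarrow> bool" where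
  "tight scale n mul V B \<longleftrightarrow>
     V = {0} \<or>
     V = module.span scale {mul es | es. length es = n \<and> set es \<subseteq> B \<and>
            mu_map scale n mul V B False (Some (hd es)) False (map Some (tl es)) = {None}}"

definition mu_quasi_mult ::
  "('f::field \<Rightarrow> 'v::ab_group_add \<Rightarrow> 'v) \<Rightarrow> nat \<Rightarrow> ('v list \<Rightarrow> 'v) \<Rightarrow> 'v set \<Rightarrow> 'v set \<Rightarrow> bool" where
  "mu_quasi_mult scale n mul V B \<longleftrightarrow>
     (\<forall>e\<in>B. \<forall>b1 k1 b2 ks. k1 \<in> idx_set B \<longrightarrow> set ks \<subseteq> idx_set B \<longrightarrow> length ks = n - 1 \<longrightarrow>
        Some e \<in> mu_map scale n mul V B b1 k1 b2 ks \<longrightarrow>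
        (\<exists>\<sigma>. \<sigma> permutes {..<n} \<and> e \<in> gen_prod scale n mul \<sigma> (map (u_of V) (k1 # ks))))"

definition inherited_basis ::
  "('f::field \<Rightarrow> 'v::ab_group_add \<Rightarrow> 'v) \<Rightarrow> ('g \<Rightarrow> 'v set) \<Rightarrow> 'v set \<Rightarrow> 'v set
    \<Rightarrow> 'v set \<Rightarrow> 'v set \<Rightarrow> 'v set \<Rightarrow> bool" where
  "inherited_basis scale Lg V B S VS BS \<longleftrightarrow>
     VS \<subseteq> V \<and> graded_subspace scale Lg VS \<and> BS \<subseteq> B \<and> BS \<noteq> {} \<and>
     VS \<inter> module.span scale BS = {0} \<and> S = setsum VS (module.span scale BS)"

definition minimal_alg ::
  "('f::field \<Rightarrow> 'v::ab_group_add \<Rightarrow> 'v) \<Rightarrow> nat \<Rightarrow> ('v list \<Rightarrow> 'v) \<Rightarrow> 'v set \<Rightarrow> ('g \<Rightarrow> 'v set)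
    \<Rightarrow> 'v set \<Rightarrow> 'v set \<Rightarrow> bool" where
  "minimal_alg scale n mul L Lg V B \<longleftrightarrow>
     (\<forall>I VI BI. I \<noteq> {0} \<longrightarrow> gLt_ideal scale n mul L Lg I \<longrightarrow> inherited_basis scale Lg V B I VI BI \<longrightarrow> I = L)"

definition is_direct_sum ::
  "('f::field \<Rightarrow> 'v::ab_group_add \<Rightarrow> 'v) \<Rightarrow> 'v set \<Rightarrow> ('v set \<times> 'b) set \<Rightarrow> bool" where
  "is_direct_sum scale L Fam \<longleftrightarrow>
     L = module.span scale (\<Union>t\<in>Fam. fst t) \<and>
     (\<forall>T x. finite T \<longrightarrow> T \<subseteq> Fam \<longrightarrow> (\<forall>t\<in>T. x t \<in> fst t) \<longrightarrow> sum x T = 0 \<longrightarrow> (\<forall>t\<in>T. x t = 0))"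

end

(* The basis B splits into the classes of the equivalence relation generated by "x is an argument
   of a product of elements of B and V that is a nonzero multiple of y". For a class C let V_C be
   spanned by the products of elements of C lying in V, and J_C = V_C + span C. A product with an
   argument in J_C lies in J_C, and it vanishes if another argument lies in J_C' for a class C' other
   than C; for arguments in V_C this follows from the gLt identity, which trades such an argument for
   products of basis elements. So each J_C is an ideal with inherited quasi-multiplicative basis C.
   Tightness makes L the sum of the J_C. In a vanishing sum of elements of distinct J_C, the
   components in span B vanish by independence of B, and the components in V are central, hence
   zero. Finally mu-quasi-multiplicativity lets one pass, inside any ideal of J_C with inherited
   basis, from a basis element to the ones it is linked with in either direction, which gives
   minimality; transferring the index maps from L to J_C shows that C is mu-quasi-multiplicative. *)

theory Submission
  imports Defs
begin

lemma permutes_less: "\<sigma> permutes {..<n} \<Longrightarrow> p < n \<Longrightarrow> \<sigma> p < n"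
  using permutes_in_image by fastforce

lemma permutes_inv_less: "\<sigma> permutes {..<n} \<Longrightarrow> i < n \<Longrightarrow> inv \<sigma> i < n \<and> \<sigma> (inv \<sigma> i) = i"
  using permutes_in_image[OF permutes_inv] permutes_inverses(1) by fastforce

lemma nth_delete_list:
  assumes "k < length ys" "r < length ys - 1"
  shows "(take k ys @ drop (Suc k) ys) ! r = ys ! (if r < k then r else Suc r)"
  using assms by (auto simp: nth_append min_def)

lemma set_delete_list: "set (take k ys @ drop (Suc k) ys) \<subseteq> set ys"
  using set_take_subset[of k ys] set_drop_subset[of "Suc k" ys] by auto

lemma mem_delete_list:
  assumes "r < length ys" "r \<noteq> k" "k < length ys"
  shows "ys ! r \<in> set (take k ys @ drop (Suc k) ys)"
proof -
  define r' where "r' = (if r < k then r else r - 1)"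
  have "r' < length (take k ys @ drop (Suc k) ys)" "(if r' < k then r' else Suc r') = r"
    using assms by (auto simp: r'_def)
  moreover have "r' < length ys - 1" using calculation(1) assms(3) by simp
  ultimately show ?thesis using nth_delete_list[OF assms(3), of r'] nth_mem by metis
qed

lemma gLt_term_shape:
  assumes xs: "length xs = n" and ys: "length ys = n - 1" and n: "2 \<le> n"
    and ij: "i < n" "j < n" and \<sigma>: "\<sigma>1 permutes {..<n}" "\<sigma>2 permutes {..<n - 1}"
  shows "\<exists>Il Ol. gLt_term mul n xs ys i j \<sigma>1 \<sigma>2 = mul Ol \<and>
    length Il = n \<and> Il ! j \<in> set xs \<and> set Il \<subseteq> insert (Il ! j) (set ys) \<and>
    (\<forall>y\<in>set ys. \<exists>q<n. q \<noteq> j \<and> Il ! q = y) \<and>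
    length Ol = n \<and> Ol ! i = mul Il \<and> (\<forall>q<n. q \<noteq> i \<longrightarrow> Ol ! q \<in> set xs)"
proof (intro exI conjI)
  define yp where "yp = permute_list \<sigma>2 ys"
  define Il where "Il = take j yp @ [xs ! \<sigma>1 i] @ drop j yp"
  define Ol where "Ol = (permute_list \<sigma>1 xs)[i := mul Il]"
  have yp: "length yp = n - 1" "set yp = set ys"
    using ys \<sigma>(2) by (simp_all add: yp_def)
  have "map (\<lambda>p. xs ! \<sigma>1 p) [0..<n] = permute_list \<sigma>1 xs"
    "map (\<lambda>p. ys ! \<sigma>2 p) [0..<n - 1] = yp"
    using xs ys by (simp_all add: permute_list_def yp_def)
  then show "gLt_term mul n xs ys i j \<sigma>1 \<sigma>2 = mul Ol"
    using upd_conv_take_nth_drop[of i "permute_list \<sigma>1 xs"] xs ij(1)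
    by (simp add: gLt_term_def Let_def Il_def Ol_def yp_def permute_list_def)
  show "length Il = n" "length Ol = n" "Ol ! i = mul Il"
    using yp xs ij n by (simp_all add: Il_def Ol_def)
  show "Il ! j \<in> set xs"
    using yp ij xs permutes_less[OF \<sigma>(1) ij(1)] by (simp add: Il_def nth_append)
  show "set Il \<subseteq> insert (Il ! j) (set ys)"
    using yp ij set_take_subset[of j yp] set_drop_subset[of j yp] by (auto simp: Il_def nth_append)
  show "\<forall>y\<in>set ys. \<exists>q<n. q \<noteq> j \<and> Il ! q = y"
  proof
    fix y assume "y \<in> set ys"
    then obtain t where t: "t < n - 1" "yp ! t = y" using yp by (metis in_set_conv_nth)
    show "\<exists>q<n. q \<noteq> j \<and> Il ! q = y"
    proof (cases "t < j")
      case True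
      then show ?thesis using t yp ij by (intro exI[of _ t]) (auto simp: Il_def nth_append)
    next
      case False
      then show ?thesis using t yp ij by (intro exI[of _ "Suc t"]) (auto simp: Il_def nth_append)
    qed
  qed
  show "\<forall>q<n. q \<noteq> i \<longrightarrow> Ol ! q \<in> set xs"
    using xs \<sigma>(1) by (auto simp: Ol_def permute_list_nth permutes_less)
qed

context vector_space
begin

lemma mem_line_iff: "x \<in> line scale e \<longleftrightarrow> (\<exists>c. x = scale c e)"
  by (auto simp: line_def)

lemma line_eq_span: "line scale e = span {e}"
  by (auto simp: line_def span_singleton)

lemma subspace_line: "subspace (line scale e)"
  by (simp add: line_eq_span)

lemma mem_subspace_scale_cancel: "subspace S \<Longrightarrow> scale c e \<in> S \<Longrightarrow> c \<noteq> 0 \<Longrightarrow> e \<in> S"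
  by (metis left_inverse scale_one scale_scale subspace_scale)

lemma nonzero_subspace_of_line_contains:
  assumes "subspace P" "P \<subseteq> line scale e" "P \<noteq> {0}"
  shows "e \<in> P"
proof -
  obtain x where x: "x \<in> P" "x \<noteq> 0" using assms(1,3) subspace_0 by blast
  have "x \<in> line scale e" using assms(2) x(1) by blast
  then obtain c where c: "x = scale c e" unfolding mem_line_iff by blast
  then have "c \<noteq> 0" using x(2) by auto
  then show ?thesis using mem_subspace_scale_cancel[OF assms(1)] x(1) c by blast
qed

lemma span_nonzero_generator: "c \<in> span X \<Longrightarrow> c \<noteq> 0 \<Longrightarrow> \<exists>x\<in>X. x \<noteq> 0"
proof (rule ccontr)
  assume "c \<in> span X" "c \<noteq> 0" "\<not> (\<exists>x\<in>X. x \<noteq> 0)"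
  then have "span X \<subseteq> {0}" using span_mono[of X "{0}"] by (auto simp: span_eq_iff)
  then show False using \<open>c \<in> span X\<close> \<open>c \<noteq> 0\<close> by auto
qed

lemma subspace_gen_prod: "subspace (gen_prod scale n mul \<sigma> As)"
  by (simp add: gen_prod_def)

lemma gen_prod_eq_span:
  assumes "\<sigma> permutes {..<n}"
  shows "gen_prod scale n mul \<sigma> As = span {mul zs | zs. length zs = n \<and> (\<forall>p<n. zs ! p \<in> As ! \<sigma> p)}"
proof -
  have "{mul (map (\<lambda>p. xs ! \<sigma> p) [0..<n]) | xs. length xs = n \<and> (\<forall>r<n. xs ! r \<in> As ! r)}
     = {mul zs | zs. length zs = n \<and> (\<forall>p<n. zs ! p \<in> As ! \<sigma> p)}" (is "?A = ?B")
  proof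
    show "?A \<subseteq> ?B"
    proof
      fix y assume "y \<in> ?A"
      then obtain xs where xs: "length xs = n" "\<forall>r<n. xs ! r \<in> As ! r"
        "y = mul (map (\<lambda>p. xs ! \<sigma> p) [0..<n])" by blast
      then have "\<forall>p<n. map (\<lambda>p. xs ! \<sigma> p) [0..<n] ! p \<in> As ! \<sigma> p"
        using permutes_less[OF assms] by simp
      then show "y \<in> ?B" using xs(3) by (intro CollectI exI[of _ "map (\<lambda>p. xs ! \<sigma> p) [0..<n]"]) simp
    qed
    show "?B \<subseteq> ?A"
    proof
      fix y assume "y \<in> ?B"
      then obtain zs where zs: "length zs = n" "\<forall>p<n. zs ! p \<in> As ! \<sigma> p" "y = mul zs" by blast
      define xs where "xs = permute_list (inv \<sigma>) zs"
      have inv: "inv \<sigma> permutes {..<length zs}" using permutes_inv[OF assms] zs(1) by simp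
      have "\<forall>r<n. xs ! r \<in> As ! r"
      proof (intro allI impI)
        fix r assume r: "r < n"
        then have "xs ! r = zs ! inv \<sigma> r" using zs(1) by (simp add: xs_def permute_list_nth[OF inv])
        then show "xs ! r \<in> As ! r" using zs(2) permutes_inv_less[OF assms r] by metis
      qed
      moreover have "map (\<lambda>p. xs ! \<sigma> p) [0..<n] = zs"
        using zs(1) permutes_less[OF assms] permutes_inverses(2)[OF assms]
        by (intro nth_equalityI) (simp_all add: xs_def permute_list_nth[OF inv])
      moreover have "length xs = n" using zs(1) by (simp add: xs_def)
      ultimately show "y \<in> ?A" using zs(3) by (intro CollectI exI[of _ xs]) simp
    qed
  qed
  then show ?thesis by (simp add: gen_prod_def)
qed

lemma mul_mem_gen_prod:
  "\<sigma> permutes {..<n} \<Longrightarrow> length zs = n \<Longrightarrow> \<forall>p<n. zs ! p \<in> As ! \<sigma> p \<Longrightarrow> mul zs \<in> gen_prod scale n mul \<sigma> As"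
  by (subst gen_prod_eq_span) (auto intro: span_base)

lemma gen_prod_subset:
  assumes "\<sigma> permutes {..<n}" "subspace T"
    "\<And>zs. length zs = n \<Longrightarrow> \<forall>p<n. zs ! p \<in> As ! \<sigma> p \<Longrightarrow> mul zs \<in> T"
  shows "gen_prod scale n mul \<sigma> As \<subseteq> T"
  unfolding gen_prod_eq_span[OF assms(1)] using assms(2,3) by (intro span_minimal) auto

lemma gen_prod_cong:
  assumes "\<sigma> permutes {..<n}" "\<tau> permutes {..<n}" "\<forall>p<n. As ! \<sigma> p = As' ! \<tau> p"
  shows "gen_prod scale n mul \<sigma> As = gen_prod scale n mul \<tau> As'"
proof -
  have "{mul zs | zs. length zs = n \<and> (\<forall>p<n. zs ! p \<in> As ! \<sigma> p)}
      = {mul zs | zs. length zs = n \<and> (\<forall>p<n. zs ! p \<in> As' ! \<tau> p)}"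
    using assms(3) by auto
  then show ?thesis unfolding gen_prod_eq_span[OF assms(1)] gen_prod_eq_span[OF assms(2)] by simp
qed

lemma gen_prod_mono:
  assumes "\<sigma> permutes {..<n}" "\<forall>r<n. As ! r \<subseteq> As' ! r"
  shows "gen_prod scale n mul \<sigma> As \<subseteq> gen_prod scale n mul \<sigma> As'"
  unfolding gen_prod_eq_span[OF assms(1)] using assms permutes_less
  by (intro span_mono) blast

lemma gen_prod_first_subset:
  assumes "0 < n" "\<sigma> permutes {..<n}" "subspace T"
    "\<And>zs q. length zs = n \<Longrightarrow> q < n \<Longrightarrow> zs ! q \<in> A \<Longrightarrow> \<forall>r<n. r \<noteq> q \<longrightarrow> zs ! r \<in> A'
      \<Longrightarrow> mul zs \<in> T"
  shows "gen_prod scale n mul \<sigma> (A # replicate (n - 1) A') \<subseteq> T"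
proof (rule gen_prod_subset[OF assms(2,3)])
  fix zs assume zs: "length zs = n" "\<forall>p<n. zs ! p \<in> (A # replicate (n - 1) A') ! \<sigma> p"
  have q: "inv \<sigma> 0 < n" "\<sigma> (inv \<sigma> 0) = 0" using permutes_inv_less[OF assms(2,1)] by auto
  have "\<forall>r<n. r \<noteq> inv \<sigma> 0 \<longrightarrow> zs ! r \<in> A'"
  proof (intro allI impI)
    fix r assume r: "r < n" "r \<noteq> inv \<sigma> 0"
    then have "\<sigma> r \<noteq> 0" "\<sigma> r < n" using permutes_inverses(2)[OF assms(2)] permutes_less[OF assms(2)] by metis+
    then show "zs ! r \<in> A'" using zs(2) r(1) by (cases "\<sigma> r") auto
  qed
  then show "mul zs \<in> T" using assms(4)[OF zs(1) q(1)] zs(2) q by (metis nth_Cons_0)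
qed

lemma mul_mem_gen_prod_first:
  assumes "length zs = n" "q < n" "zs ! q \<in> A" "\<forall>r<n. r \<noteq> q \<longrightarrow> zs ! r \<in> A'"
  shows "Transposition.transpose 0 q permutes {..<n}"
    and "mul zs \<in> gen_prod scale n mul (Transposition.transpose 0 q) (A # replicate (n - 1) A')"
proof -
  show t: "Transposition.transpose 0 q permutes {..<n}"
    using assms(2) by (intro permutes_swap_id) auto
  have "zs ! r \<in> (A # replicate (n - 1) A') ! Transposition.transpose 0 q r" if "r < n" for r
  proof (cases "r = q")
    case False
    then have "Transposition.transpose 0 q r \<noteq> 0" "Transposition.transpose 0 q r < n"
      using permutes_less[OF t that] by (auto simp: transpose_def)
    then show ?thesis using assms(4) that False by (cases "Transposition.transpose 0 q r") auto
  qed (use assms(3) in simp)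
  then show "mul zs \<in> gen_prod scale n mul (Transposition.transpose 0 q) (A # replicate (n - 1) A')"
    using mul_mem_gen_prod[OF t assms(1)] by blast
qed

lemma gLt_idealI:
  assumes "0 < n" "I \<subseteq> A" "graded_subspace scale Lg I"
    "\<And>zs q. length zs = n \<Longrightarrow> q < n \<Longrightarrow> zs ! q \<in> I \<Longrightarrow> \<forall>r<n. r \<noteq> q \<longrightarrow> zs ! r \<in> A
      \<Longrightarrow> mul zs \<in> I"
  shows "gLt_ideal scale n mul A Lg I"
  using assms gen_prod_first_subset[OF assms(1)]
  by (auto simp: gLt_ideal_def graded_subspace_def)

lemma gLt_ideal_mul_mem:
  assumes "gLt_ideal scale n mul A Lg I" "length zs = n" "q < n" "zs ! q \<in> I"
    "\<forall>r<n. r \<noteq> q \<longrightarrow> zs ! r \<in> A"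
  shows "mul zs \<in> I"
  using assms(1) mul_mem_gen_prod_first[OF assms(2-5)] by (auto simp: gLt_ideal_def)

lemma mem_centerI:
  assumes "0 < n" "x \<in> A"
    "\<And>zs q. length zs = n \<Longrightarrow> q < n \<Longrightarrow> zs ! q = x \<Longrightarrow> \<forall>r<n. r \<noteq> q \<longrightarrow> zs ! r \<in> A
      \<Longrightarrow> mul zs = 0"
  shows "x \<in> center scale n mul A"
proof -
  have "gen_prod scale n mul \<sigma> ({x} # replicate (n - 1) A) = {0}" if "\<sigma> permutes {..<n}" for \<sigma>
    using gen_prod_first_subset[OF assms(1) that subspace_single_0, where A = "{x}" and A' = A and mul = mul] assms(3)
      subspace_0[OF subspace_gen_prod] by auto
  then show ?thesis using assms(2) by (simp add: center_def)
qed

lemma gen_prod_id_singletons: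
  assumes "length zs = n"
  shows "gen_prod scale n mul id (map (\<lambda>z. {z}) zs) = span {mul zs}"
proof -
  have "{mul ys | ys. length ys = n \<and> (\<forall>p<n. ys ! p \<in> map (\<lambda>z. {z}) zs ! id p)} = {mul zs}"
  proof -
    have "length ys = n \<Longrightarrow> \<forall>p<n. ys ! p \<in> map (\<lambda>z. {z}) zs ! id p \<Longrightarrow> ys = zs" for ys
      using assms by (auto intro: nth_equalityI)
    then show ?thesis using assms by auto
  qed
  then show ?thesis by (simp add: gen_prod_eq_span[OF permutes_id])
qed

end

locale nary_algebra = vector_space scale
  for scale :: "'f::field \<Rightarrow> 'v::ab_group_add \<Rightarrow> 'v" (infixr \<open>*s\<close> 75) +
  fixes n :: nat and mul :: "'v list \<Rightarrow> 'v" and L :: "'v set" and Lg :: "'g::ab_group_add \<Rightarrow> 'v set"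
  assumes graded: "graded_nary_algebra scale n mul L Lg"
begin

lemma L_eq_span_homogeneous: "L = span (\<Union>g. Lg g)"
  and homogeneous_subset: "Lg g \<subseteq> L"
  using graded by (auto simp: graded_nary_algebra_def graded_space_def)

lemma subspace_L: "subspace L"
  by (metis L_eq_span_homogeneous subspace_span)

lemma mul_closed: "length xs = n \<Longrightarrow> set xs \<subseteq> L \<Longrightarrow> mul xs \<in> L"
  using graded by (auto simp: graded_nary_algebra_def)

lemma mul_update_add:
  "length xs = n \<Longrightarrow> set xs \<subseteq> L \<Longrightarrow> p < n \<Longrightarrow> a \<in> L \<Longrightarrow> b \<in> L \<Longrightarrow>
    mul (xs[p := a + b]) = mul (xs[p := a]) + mul (xs[p := b])"
  using graded unfolding graded_nary_algebra_def by blast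

lemma mul_update_scale:
  "length xs = n \<Longrightarrow> set xs \<subseteq> L \<Longrightarrow> p < n \<Longrightarrow> a \<in> L \<Longrightarrow>
    mul (xs[p := c *s a]) = c *s mul (xs[p := a])"
  using graded unfolding graded_nary_algebra_def by blast

lemma mul_homogeneous: "length xs = n \<Longrightarrow> \<forall>r<n. xs ! r \<in> Lg (gs r) \<Longrightarrow> mul xs \<in> Lg (\<Sum>r<n. gs r)"
  using graded unfolding graded_nary_algebra_def by blast

lemma set_update_subset_L: "set xs \<subseteq> L \<Longrightarrow> a \<in> L \<Longrightarrow> set (xs[p := a]) \<subseteq> L"
  by (meson dual_order.trans insert_subset set_update_subset_insert)

lemma mul_update_zero:
  assumes "length xs = n" "set xs \<subseteq> L" "p < n"
  shows "mul (xs[p := 0]) = 0"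
  using mul_update_add[OF assms subspace_0[OF subspace_L] subspace_0[OF subspace_L]] by simp

lemma mul_eq_0_if_nth_0: "length xs = n \<Longrightarrow> set xs \<subseteq> L \<Longrightarrow> p < n \<Longrightarrow> xs ! p = 0 \<Longrightarrow> mul xs = 0"
  by (metis mul_update_zero list_update_id)

lemma mul_update_sum:
  assumes "finite S" "length ys = n" "set ys \<subseteq> L" "q < n" "\<forall>t\<in>S. f t \<in> L"
  shows "mul (ys[q := (\<Sum>t\<in>S. f t)]) = (\<Sum>t\<in>S. mul (ys[q := f t]))"
  using assms(1,5)
proof (induction S rule: finite_induct)
  case empty
  then show ?case using mul_update_zero[OF assms(2-4)] by simp
next
  case (insert a S)
  have "(\<Sum>t\<in>S. f t) \<in> L" using insert.prems by (intro subspace_sum[OF subspace_L]) auto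
  then show ?case
    using insert mul_update_add[OF assms(2-4), of "f a" "\<Sum>t\<in>S. f t"] by simp
qed

lemma homogeneous_mul:
  assumes "length es = n" "\<forall>x\<in>set es. \<exists>g. x \<in> Lg g"
  shows "\<exists>g. mul es \<in> Lg g"
proof -
  have "\<forall>r<n. \<exists>g. es ! r \<in> Lg g" using assms nth_mem by blast
  then obtain gs where "\<forall>r<n. es ! r \<in> Lg (gs r)" by metis
  then show ?thesis using mul_homogeneous[OF assms(1)] by blast
qed

lemma graded_subspace_spanI:
  assumes "U = span G" "\<forall>x\<in>G. \<exists>g. x \<in> Lg g"
  shows "graded_subspace scale Lg U"
  unfolding graded_subspace_def
proof
  show "subspace U" using assms(1) by simp
  have "span G \<subseteq> span (\<Union>g. U \<inter> Lg g)"
    using assms span_superset by (intro span_mono) blast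
  moreover have "span (\<Union>g. U \<inter> Lg g) \<subseteq> U" using assms(1) by (intro span_minimal) auto
  ultimately show "U = span (\<Union>g. U \<inter> Lg g)" using assms(1) by blast
qed

lemma subspace_mul_preimage:
  assumes "subspace T" "length ys = n" "set ys \<subseteq> L" "q < n"
  shows "subspace {a \<in> L. mul (ys[q := a]) \<in> T}"
proof (rule subspaceI)
  show "0 \<in> {a \<in> L. mul (ys[q := a]) \<in> T}"
    using mul_update_zero[OF assms(2-4)] subspace_0[OF assms(1)] subspace_0[OF subspace_L] by simp
next
  fix x y assume "x \<in> {a \<in> L. mul (ys[q := a]) \<in> T}" "y \<in> {a \<in> L. mul (ys[q := a]) \<in> T}"
  then show "x + y \<in> {a \<in> L. mul (ys[q := a]) \<in> T}"
    using mul_update_add[OF assms(2-4), of x y] subspace_add[OF assms(1)] subspace_add[OF subspace_L] by simp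
next
  fix c x assume "x \<in> {a \<in> L. mul (ys[q := a]) \<in> T}"
  then show "c *s x \<in> {a \<in> L. mul (ys[q := a]) \<in> T}"
    using mul_update_scale[OF assms(2-4), of x c] subspace_scale[OF assms(1)] subspace_scale[OF subspace_L]
    by simp
qed

lemma mul_mem_subspace_by_generator:
  assumes T: "subspace T" and zs: "length zs = n" "set zs \<subseteq> L" "p < n"
    and G: "G \<subseteq> L" "zs ! p \<in> span G"
    and H: "\<And>a. a \<in> G \<Longrightarrow> mul (zs[p := a]) \<in> T"
  shows "mul zs \<in> T"
proof -
  have "zs ! p \<in> {a \<in> L. mul (zs[p := a]) \<in> T}"
    using G(2) by (rule span_subspace_induct[OF _ subspace_mul_preimage[OF T zs]]) (use H G(1) in blast)
  then show ?thesis by simp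
qed

lemma mul_mem_subspace_by_generators:
  assumes T: "subspace T" and G: "G \<subseteq> L" and Q: "Q \<subseteq> {..<n}"
    and xs: "length xs = n" "set xs \<subseteq> L" "\<forall>r\<in>Q. xs ! r \<in> span G"
    and H: "\<And>ys. length ys = n \<Longrightarrow> set ys \<subseteq> L \<Longrightarrow> \<forall>r<n. r \<notin> Q \<longrightarrow> ys ! r = xs ! r \<Longrightarrow>
      \<forall>r\<in>Q. ys ! r \<in> G \<Longrightarrow> mul ys \<in> T"
  shows "mul xs \<in> T"
  using finite_subset[OF Q finite_lessThan] Q xs H
proof (induction Q arbitrary: xs rule: finite_induct)
  case empty
  then show ?case by auto
next
  case (insert q Q)
  have q: "q < n" using insert.prems(1) by auto
  show ?case
  proof (rule insert.IH)
    fix ys assume ys: "length ys = n" "set ys \<subseteq> L" "\<forall>r<n. r \<notin> Q \<longrightarrow> ys ! r = xs ! r"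
      "\<forall>r\<in>Q. ys ! r \<in> G"
    have "ys ! q \<in> span G" using ys(3) q insert.hyps(2) insert.prems(4) by auto
    then show "mul ys \<in> T"
    proof (intro mul_mem_subspace_by_generator[OF T ys(1,2) q G])
      fix a assume a: "a \<in> G"
      show "mul (ys[q := a]) \<in> T"
        using insert.prems(5)[of "ys[q := a]"] ys a G q insert.hyps(2) set_update_subset_L[OF ys(2)]
        by (auto simp: nth_list_update)
    qed
  qed (use insert.prems in auto)
qed

lemma mul_mem_subspace_by_homogeneous:
  assumes T: "subspace T" and F: "F \<subseteq> {..<n}"
    and zs: "length zs = n" "set zs \<subseteq> L" "\<forall>r\<in>F. \<exists>g. zs ! r \<in> Lg g"
    and H: "\<And>ys. length ys = n \<Longrightarrow> set ys \<subseteq> L \<Longrightarrow> \<forall>y\<in>set ys. \<exists>g. y \<in> Lg g \<Longrightarrow>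
      \<forall>r\<in>F. ys ! r = zs ! r \<Longrightarrow> mul ys \<in> T"
  shows "mul zs \<in> T"
proof (rule mul_mem_subspace_by_generators[OF T _ _ zs(1,2), of "\<Union>g. Lg g" "{..<n} - F"])
  show "\<forall>r\<in>{..<n} - F. zs ! r \<in> span (\<Union>g. Lg g)"
    using zs(1,2) L_eq_span_homogeneous nth_mem by fastforce
  fix ys assume "length ys = n" "set ys \<subseteq> L" "\<forall>r<n. r \<notin> {..<n} - F \<longrightarrow> ys ! r = zs ! r"
    "\<forall>r\<in>{..<n} - F. ys ! r \<in> (\<Union>g. Lg g)"
  moreover have "\<forall>r<n. \<exists>g. ys ! r \<in> Lg g"
    using calculation zs(3) by (metis DiffI UN_E lessThan_iff)
  then have "\<forall>y\<in>set ys. \<exists>g. y \<in> Lg g" using calculation(1) by (auto simp: in_set_conv_nth)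
  ultimately show "mul ys \<in> T" using H[of ys] F by auto
qed (use homogeneous_subset in auto)

end

locale gLt_algebra = nary_algebra +
  fixes eps
  assumes n_ge_2: "2 \<le> n"
    and gLt: "color_gLt_algebra scale n mul eps L Lg"
begin

lemma gLt_identity_in_span:
  assumes "k < n" "length xs = n" "length ys = n - 1"
    "\<forall>x\<in>set xs. \<exists>g. x \<in> Lg g" "\<forall>y\<in>set ys. \<exists>g. y \<in> Lg g"
  shows "mul (take k ys @ [mul xs] @ drop k ys) \<in> span {gLt_term mul n xs ys i j \<sigma>1 \<sigma>2 | i j \<sigma>1 \<sigma>2.
    i < n \<and> j < n \<and> \<sigma>1 permutes {..<n} \<and> \<sigma>2 permutes {..<n - 1}}" (is "_ \<in> span ?G")
proof -
  obtain \<alpha> where \<alpha>: "\<forall>k<n. \<forall>xs ys gx gy.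
    length xs = n \<longrightarrow> length ys = n - 1 \<longrightarrow>
    (\<forall>r<n. xs ! r \<in> Lg (gx r)) \<longrightarrow> (\<forall>r<n - 1. ys ! r \<in> Lg (gy r)) \<longrightarrow>
    mul (take k ys @ [mul xs] @ drop k ys) =
    (\<Sum>i<n. \<Sum>j<n. \<Sum>\<sigma>1\<in>{\<sigma>. \<sigma> permutes {..<n}}. \<Sum>\<sigma>2\<in>{\<sigma>. \<sigma> permutes {..<n - 1}}.
      (\<alpha> i j k \<sigma>1 \<sigma>2 * color_sign eps (case_sum gx gy) (gLt_lhs_order n k) (gLt_rhs_order n i j \<sigma>1 \<sigma>2))
      *s gLt_term mul n xs ys i j \<sigma>1 \<sigma>2)"
    using gLt unfolding color_gLt_algebra_def by blast
  have "\<forall>r<n. \<exists>g. xs ! r \<in> Lg g" "\<forall>r<n - 1. \<exists>g. ys ! r \<in> Lg g"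
    using assms(2-5) nth_mem by auto
  then obtain gx gy where g: "\<forall>r<n. xs ! r \<in> Lg (gx r)" "\<forall>r<n - 1. ys ! r \<in> Lg (gy r)" by metis
  have "(\<Sum>i<n. \<Sum>j<n. \<Sum>\<sigma>1\<in>{\<sigma>. \<sigma> permutes {..<n}}. \<Sum>\<sigma>2\<in>{\<sigma>. \<sigma> permutes {..<n - 1}}.
      (\<alpha> i j k \<sigma>1 \<sigma>2 * color_sign eps (case_sum gx gy) (gLt_lhs_order n k) (gLt_rhs_order n i j \<sigma>1 \<sigma>2))
      *s gLt_term mul n xs ys i j \<sigma>1 \<sigma>2) \<in> span ?G"
    by (intro span_sum span_scale span_base) auto
  then show ?thesis using \<alpha>[rule_format, OF assms(1-3) g[rule_format]] by simp
qed

lemma gLt_term_mem_subspace: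
  assumes xs: "length xs = n" "set xs \<subseteq> L" and ys: "length ys = n - 1" "set ys \<subseteq> L"
    and ij: "i < n" "j < n" and \<sigma>: "\<sigma>1 permutes {..<n}" "\<sigma>2 permutes {..<n - 1}"
    and H: "\<And>Il Ol. length Il = n \<Longrightarrow> set Il \<subseteq> L \<Longrightarrow> Il ! j \<in> set xs \<Longrightarrow>
      \<forall>y\<in>set ys. \<exists>q<n. q \<noteq> j \<and> Il ! q = y \<Longrightarrow>
      length Ol = n \<Longrightarrow> set Ol \<subseteq> L \<Longrightarrow> Ol ! i = mul Il \<Longrightarrow> \<forall>q<n. q \<noteq> i \<longrightarrow> Ol ! q \<in> set xs \<Longrightarrow>
      mul Ol \<in> T"
  shows "gLt_term mul n xs ys i j \<sigma>1 \<sigma>2 \<in> T"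
proof -
  obtain Il Ol where IO: "gLt_term mul n xs ys i j \<sigma>1 \<sigma>2 = mul Ol"
    "length Il = n" "Il ! j \<in> set xs" "set Il \<subseteq> insert (Il ! j) (set ys)"
    "\<forall>y\<in>set ys. \<exists>q<n. q \<noteq> j \<and> Il ! q = y"
    "length Ol = n" "Ol ! i = mul Il" "\<forall>q<n. q \<noteq> i \<longrightarrow> Ol ! q \<in> set xs"
    using gLt_term_shape[OF xs(1) ys(1) n_ge_2 ij \<sigma>] by blast
  have IlL: "set Il \<subseteq> L" using IO(3,4) xs(2) ys(2) by blast
  have "set Ol \<subseteq> L"
  proof
    fix w assume "w \<in> set Ol"
    then obtain q where "q < n" "w = Ol ! q" using IO(6) by (metis in_set_conv_nth)
    then show "w \<in> L" using IO(7,8) xs(2) mul_closed[OF IO(2) IlL] by (cases "q = i") auto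
  qed
  then show ?thesis using H[OF IO(2) IlL IO(3,5,6) _ IO(7,8)] IO(1) by simp
qed

text \<open>The gLt identity rewrites a product having \<open>\<langle>x\<^sub>1, \<dots>, x\<^sub>n\<rangle>\<close> as its \<open>k\<close>-th argument into
  products \<open>Ol\<close> of \<open>x\<^sub>r\<close>'s and one product \<open>Il\<close>, which combines an \<open>x\<^sub>r\<close> with all the other
  original arguments.\<close>

lemma mul_mem_subspace_by_expansion:
  assumes T: "subspace T" and zs: "length zs = n" "set zs \<subseteq> L" and k: "k < n" "zs ! k = mul es"
    and es: "length es = n" "set es \<subseteq> L" "\<forall>x\<in>set es. \<exists>g. x \<in> Lg g"
    and F: "F \<subseteq> {..<n}" "\<forall>r\<in>F. \<exists>g. zs ! r \<in> Lg g"
    and H: "\<And>Il Ol i j. length Il = n \<Longrightarrow> set Il \<subseteq> L \<Longrightarrow> j < n \<Longrightarrow> Il ! j \<in> set es \<Longrightarrow>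
      \<forall>r\<in>F - {k}. \<exists>q<n. q \<noteq> j \<and> Il ! q = zs ! r \<Longrightarrow>
      length Ol = n \<Longrightarrow> set Ol \<subseteq> L \<Longrightarrow> i < n \<Longrightarrow> Ol ! i = mul Il \<Longrightarrow>
      \<forall>q<n. q \<noteq> i \<longrightarrow> Ol ! q \<in> set es \<Longrightarrow> mul Ol \<in> T"
  shows "mul zs \<in> T"
proof (rule mul_mem_subspace_by_homogeneous[OF T _ zs, of "insert k F"])
  show "insert k F \<subseteq> {..<n}" using k F by auto
  show "\<forall>r\<in>insert k F. \<exists>g. zs ! r \<in> Lg g" using F homogeneous_mul[OF es(1,3)] k(2) by auto
  fix ys assume ys: "length ys = n" "set ys \<subseteq> L" "\<forall>y\<in>set ys. \<exists>g. y \<in> Lg g"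
    "\<forall>r\<in>insert k F. ys ! r = zs ! r"
  define ys' where "ys' = take k ys @ drop (Suc k) ys"
  have ys': "length ys' = n - 1" "set ys' \<subseteq> L" "ys = take k ys' @ [mul es] @ drop k ys'"
    using ys k set_delete_list[of k ys] id_take_nth_drop[of k ys] by (auto simp: ys'_def)
  have "\<forall>y\<in>set ys'. \<exists>g. y \<in> Lg g" using ys(3) set_delete_list[of k ys] unfolding ys'_def by blast
  from gLt_identity_in_span[OF k(1) es(1) ys'(1) es(3) this] ys'(3)
  have "mul ys \<in> span {gLt_term mul n es ys' i j \<sigma>1 \<sigma>2 | i j \<sigma>1 \<sigma>2.
    i < n \<and> j < n \<and> \<sigma>1 permutes {..<n} \<and> \<sigma>2 permutes {..<n - 1}}" by simp
  moreover have "{gLt_term mul n es ys' i j \<sigma>1 \<sigma>2 | i j \<sigma>1 \<sigma>2.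
    i < n \<and> j < n \<and> \<sigma>1 permutes {..<n} \<and> \<sigma>2 permutes {..<n - 1}} \<subseteq> T"
  proof clarify
    fix i j \<sigma>1 \<sigma>2 assume ij: "i < n" "j < n" and \<sigma>: "\<sigma>1 permutes {..<n}" "\<sigma>2 permutes {..<n - 1}"
    show "gLt_term mul n es ys' i j \<sigma>1 \<sigma>2 \<in> T"
    proof (rule gLt_term_mem_subspace[OF es(1,2) ys'(1,2) ij \<sigma>])
      fix Il Ol assume Il: "length Il = n" "set Il \<subseteq> L" "Il ! j \<in> set es"
        "\<forall>y\<in>set ys'. \<exists>q<n. q \<noteq> j \<and> Il ! q = y"
        and Ol: "length Ol = n" "set Ol \<subseteq> L" "Ol ! i = mul Il" "\<forall>q<n. q \<noteq> i \<longrightarrow> Ol ! q \<in> set es"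
      have "\<forall>r\<in>F - {k}. \<exists>q<n. q \<noteq> j \<and> Il ! q = zs ! r"
      proof
        fix r assume r: "r \<in> F - {k}"
        then have "zs ! r = ys ! r" "r < n" using ys(4) F by auto
        moreover from this have "ys ! r \<in> set ys'"
          using mem_delete_list[of r ys k] ys(1) k(1) r unfolding ys'_def by auto
        ultimately show "\<exists>q<n. q \<noteq> j \<and> Il ! q = zs ! r" using Il(4) by auto
      qed
      then show "mul Ol \<in> T" using H[OF Il(1,2) ij(2) Il(3) _ Ol(1,2) ij(1) Ol(3,4)] by blast
    qed
  qed
  ultimately show "mul ys \<in> T" using span_minimal[OF _ T] by blast
qed

end

locale qm_algebra = nary_algebra +
  fixes V B
  assumes qmb: "quasi_mult_basis scale n mul L Lg V B"
begin

abbreviation gp where "gp \<equiv> gen_prod scale n mul"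

lemma V_subset_L: "V \<subseteq> L"
  using qmb unfolding quasi_mult_basis_def by (elim conjE) assumption

lemma graded_V: "graded_subspace scale Lg V"
  using qmb unfolding quasi_mult_basis_def by (elim conjE) assumption

lemma B_subset_L: "B \<subseteq> L"
  using qmb unfolding quasi_mult_basis_def by (elim conjE) assumption

lemma independent_B: "independent B"
  using qmb unfolding quasi_mult_basis_def by (elim conjE) assumption

lemma homogeneous_B: "\<forall>e\<in>B. \<exists>g. e \<in> Lg g"
  using qmb unfolding quasi_mult_basis_def by (elim conjE) assumption

lemma L_eq_V_plus_span_B: "L = setsum V (span B)"
  using qmb unfolding quasi_mult_basis_def by (elim conjE) assumption

lemma V_inter_span_B: "V \<inter> span B = {0}"
  using qmb unfolding quasi_mult_basis_def by (elim conjE) assumption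

lemma basis_product: "\<forall>es. length es = n \<longrightarrow> set es \<subseteq> B \<longrightarrow>
    (\<exists>e\<in>B. mul es \<in> line scale e) \<or> mul es \<in> V"
  using qmb unfolding quasi_mult_basis_def by (elim conjE) assumption

lemma basis_V_product: "\<forall>k es \<sigma>. 0 < k \<longrightarrow> k < n \<longrightarrow> length es = k \<longrightarrow> set es \<subseteq> B \<longrightarrow>
    \<sigma> permutes {..<n} \<longrightarrow> (\<exists>e\<in>B. gp \<sigma> (map (\<lambda>x. {x}) es @ replicate (n - k) V) \<subseteq> line scale e)"
  using qmb unfolding quasi_mult_basis_def by (elim conjE) assumption

lemma V_product: "(\<exists>e\<in>B. gp id (replicate n V) \<subseteq> line scale e) \<or> gp id (replicate n V) \<subseteq> V"
  using qmb unfolding quasi_mult_basis_def by (elim conjE) assumption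

lemma subspace_V: "subspace V"
  using graded_V by (simp add: graded_subspace_def)

lemma zero_notin_B: "0 \<notin> B"
  using independent_B dependent_zero by blast

lemma B_disjoint_V: "b \<in> B \<Longrightarrow> b \<notin> V"
  by (metis IntI V_inter_span_B singletonD span_base zero_notin_B)

lemma L_subset_span_B_V: "L \<subseteq> span (B \<union> V)"
proof
  fix x assume "x \<in> L"
  then obtain v w where vw: "x = v + w" "v \<in> V" "w \<in> span B"
    using L_eq_V_plus_span_B by (auto simp: setsum_def)
  have "v \<in> span (B \<union> V)" "w \<in> span (B \<union> V)"
    using vw(2,3) span_mono[of B "B \<union> V"] by (auto intro: span_base)
  then show "x \<in> span (B \<union> V)" unfolding vw(1) by (rule span_add)
qed

lemma mem_span_subset_B: "C \<subseteq> B \<Longrightarrow> e \<in> B \<Longrightarrow> e \<in> span C \<Longrightarrow> e \<in> C"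
  by (metis independent_B independent_insert independent_mono insert_subset)

lemma line_inter_V: "e \<in> B \<Longrightarrow> x \<in> line scale e \<Longrightarrow> x \<in> V \<Longrightarrow> x = 0"
  using V_inter_span_B by (auto simp: mem_line_iff intro: span_scale span_base)

lemma basis_elem_unique_line:
  assumes "e \<in> B" "e' \<in> B" "x \<noteq> 0" "x \<in> line scale e" "x \<in> line scale e'"
  shows "e = e'"
proof -
  obtain c c' where c: "x = c *s e" "x = c' *s e'" using assms(4,5) unfolding mem_line_iff by blast
  then have "c \<noteq> 0" using assms(3) by auto
  then have "e = (c' / c) *s e'"
    using c by (metis (no_types, lifting) divide_inverse_commute scale_one scale_scale left_inverse)
  then have "e \<in> span {e'}" by (simp add: span_base span_scale)
  then show ?thesis using mem_span_subset_B[of "{e'}" e] assms(1,2) by auto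
qed

lemma span_disjoint_subsets_B:
  assumes "C1 \<subseteq> B" "C2 \<subseteq> B" "C1 \<inter> C2 = {}" "x \<in> span C1" "x \<in> span C2"
  shows "x = 0"
proof -
  obtain t1 r1 where 1: "finite t1" "t1 \<subseteq> C1" "x = (\<Sum>a\<in>t1. r1 a *s a)"
    using assms(4) unfolding span_explicit by blast
  obtain t2 r2 where 2: "finite t2" "t2 \<subseteq> C2" "x = (\<Sum>a\<in>t2. r2 a *s a)"
    using assms(5) unfolding span_explicit by blast
  define w where "w a = (if a \<in> t1 then r1 a else - r2 a)" for a
  have d: "t1 \<inter> t2 = {}" using 1 2 assms(3) by auto
  have "(\<Sum>a\<in>t1 \<union> t2. w a *s a) = (\<Sum>a\<in>t1. w a *s a) + (\<Sum>a\<in>t2. w a *s a)"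
    using sum.union_disjoint[OF 1(1) 2(1) d] by simp
  also have "(\<Sum>a\<in>t1. w a *s a) = x" using 1(3) by (simp add: w_def)
  also have "(\<Sum>a\<in>t2. w a *s a) = - x"
    using 2(3) d by (auto simp: w_def sum_negf[symmetric] intro!: sum.cong)
  finally have "(\<Sum>a\<in>t1 \<union> t2. w a *s a) = 0" by simp
  then have "\<forall>a\<in>t1. w a = 0"
    using independentD[OF independent_B] 1 2 assms(1,2) by blast
  then show ?thesis using 1(3) by (simp add: w_def)
qed

lemma mul_mem_subspace_by_basis:
  assumes T: "subspace T" and F: "F \<subseteq> {..<n}"
    and zs: "length zs = n" "set zs \<subseteq> L" "\<forall>r\<in>F. zs ! r \<in> B \<union> V"
    and H: "\<And>ys. length ys = n \<Longrightarrow> set ys \<subseteq> B \<union> V \<Longrightarrow> \<forall>r\<in>F. ys ! r = zs ! r \<Longrightarrow> mul ys \<in> T"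
  shows "mul zs \<in> T"
proof (rule mul_mem_subspace_by_generators[OF T _ _ zs(1,2), of "B \<union> V" "{..<n} - F"])
  show "\<forall>r\<in>{..<n} - F. zs ! r \<in> span (B \<union> V)"
  proof
    fix r assume "r \<in> {..<n} - F"
    then have "zs ! r \<in> L" using zs(1,2) nth_mem by fastforce
    then show "zs ! r \<in> span (B \<union> V)" using L_subset_span_B_V by blast
  qed
  fix ys assume ys: "length ys = n" "set ys \<subseteq> L" "\<forall>r<n. r \<notin> {..<n} - F \<longrightarrow> ys ! r = zs ! r"
    "\<forall>r\<in>{..<n} - F. ys ! r \<in> B \<union> V"
  have "\<forall>r\<in>F. ys ! r = zs ! r" using ys(3) F by blast
  moreover have "set ys \<subseteq> B \<union> V"
  proof
    fix y assume "y \<in> set ys"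
    then obtain r where "r < n" "y = ys ! r" using ys(1) by (metis in_set_conv_nth)
    then show "y \<in> B \<union> V" using calculation zs(3) ys(4) by (cases "r \<in> F") auto
  qed
  ultimately show "mul ys \<in> T" using H ys(1) by blast
qed (use B_subset_L V_subset_L in auto)

lemma u_of_subset: "j \<in> idx_set B \<Longrightarrow> u_of V j \<subseteq> B \<union> V"
  by (auto simp: idx_set_def u_of_def)

lemma gen_prod_indices_generator:
  assumes "\<sigma> permutes {..<n}" "length js = n" "set js \<subseteq> idx_set B"
    "length zs = n" "\<forall>p<n. zs ! p \<in> map (u_of V) js ! \<sigma> p"
  shows "set zs \<subseteq> B \<union> V"
    and "i < n \<Longrightarrow> js ! i = Some c \<Longrightarrow> zs ! inv \<sigma> i = c"
proof -
  show "set zs \<subseteq> B \<union> V"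
  proof
    fix w assume "w \<in> set zs"
    then obtain q where q: "q < n" "w = zs ! q" using assms(4) by (metis in_set_conv_nth)
    then have "w \<in> u_of V (js ! \<sigma> q)" "js ! \<sigma> q \<in> idx_set B"
      using assms permutes_less[OF assms(1) q(1)] nth_mem by auto
    then show "w \<in> B \<union> V" using u_of_subset by blast
  qed
  assume "i < n" "js ! i = Some c"
  then show "zs ! inv \<sigma> i = c"
    using assms(2,5) permutes_inv_less[OF assms(1)] by (metis nth_map singletonD u_of_def option.simps(5))
qed

text \<open>Reordering the arguments, every \<open>\<langle>u\<^sub>j\<^sub>1, \<dots>, u\<^sub>j\<^sub>n\<rangle>\<^sub>\<sigma>\<close> becomes a product of basis
  elements followed by copies of \<open>V\<close>, the shape treated by the axioms of a quasi-multiplicative basis.\<close>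

lemma gen_prod_indices_normal_form:
  assumes \<sigma>: "\<sigma> permutes {..<n}" and js: "length js = n" "set js \<subseteq> idx_set B"
  obtains \<tau> es where "\<tau> permutes {..<n}" "set es \<subseteq> B" "length es \<le> n"
    "gp \<sigma> (map (u_of V) js) = gp \<tau> (map (\<lambda>x. {x}) es @ replicate (n - length es) V)"
    "length es = 0 \<longleftrightarrow> set js \<subseteq> {None}" "length es = n \<longleftrightarrow> None \<notin> set js"
proof -
  define js1 where "js1 = filter (\<lambda>j. j \<noteq> None) js"
  define js2 where "js2 = filter (\<lambda>j. j = None) js"
  have "mset js = mset (js1 @ js2)"
    unfolding js1_def js2_def by (induction js) (auto simp: add.commute add.left_commute)
  then obtain \<rho> where \<rho>: "\<rho> permutes {..<length (js1 @ js2)}" "permute_list \<rho> (js1 @ js2) = js"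
    by (rule mset_eq_permutation)
  have l: "length js1 + length js2 = n"
    using sum_length_filter_compl[of "\<lambda>j. j \<noteq> None" js] js(1) by (simp add: js1_def js2_def)
  then have \<rho>n: "\<rho> permutes {..<n}" using \<rho>(1) by simp
  define es where "es = map the js1"
  have les: "length es = length js1" by (simp add: es_def)
  have "js2 = replicate (length js2) None"
    using replicate_length_filter[of None js] by (simp add: js2_def eq_commute[of None])
  moreover have "length js2 = n - length es" using l les by simp
  ultimately have js2: "js2 = replicate (n - length es) None" by simp
  have esB: "set es \<subseteq> B" using js(2) by (auto simp: es_def js1_def idx_set_def)
  have can: "map (u_of V) (js1 @ js2) = map (\<lambda>x. {x}) es @ replicate (n - length es) V"
    using js2 by (auto simp: es_def js1_def u_of_def)
  show thesis
  proof
    show \<tau>: "\<rho> \<circ> \<sigma> permutes {..<n}" by (rule permutes_compose[OF \<sigma> \<rho>n])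
    show "gp \<sigma> (map (u_of V) js) = gp (\<rho> \<circ> \<sigma>) (map (\<lambda>x. {x}) es @ replicate (n - length es) V)"
    proof (rule gen_prod_cong[OF \<sigma> \<tau>], intro allI impI)
      fix p assume "p < n"
      then have p: "\<sigma> p < n" "\<rho> (\<sigma> p) < n" using permutes_less[OF \<sigma>] permutes_less[OF \<rho>n] by auto
      have "map (u_of V) js ! \<sigma> p = u_of V ((js1 @ js2) ! \<rho> (\<sigma> p))"
        using p \<rho> js(1) l permute_list_nth[OF \<rho>(1)] by auto
      also have "\<dots> = map (u_of V) (js1 @ js2) ! \<rho> (\<sigma> p)" using p l by (simp del: map_append)
      also have "\<dots> = (map (\<lambda>x. {x}) es @ replicate (n - length es) V) ! (\<rho> \<circ> \<sigma>) p"
        by (simp only: can comp_def)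
      finally show "map (u_of V) js ! \<sigma> p = (map (\<lambda>x. {x}) es @ replicate (n - length es) V) ! (\<rho> \<circ> \<sigma>) p" .
    qed
    have "js1 = [] \<longleftrightarrow> set js \<subseteq> {None}" "js2 = [] \<longleftrightarrow> None \<notin> set js"
      unfolding js1_def js2_def filter_empty_conv by (auto, metis option.exhaust)
    then show "length es = 0 \<longleftrightarrow> set js \<subseteq> {None}" "length es = n \<longleftrightarrow> None \<notin> set js"
      using les l by auto
  qed (use esB les l in auto)
qed

lemma gen_prod_indices_cases:
  assumes \<sigma>: "\<sigma> permutes {..<n}" and js: "length js = n" "set js \<subseteq> idx_set B"
  shows "(\<exists>e\<in>B. gp \<sigma> (map (u_of V) js) \<subseteq> line scale e) \<or>
    (gp \<sigma> (map (u_of V) js) \<subseteq> V \<and> (None \<notin> set js \<or> set js \<subseteq> {None}))"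
proof -
  obtain \<tau> es where \<tau>: "\<tau> permutes {..<n}" and es: "set es \<subseteq> B" "length es \<le> n"
    and eq: "gp \<sigma> (map (u_of V) js) = gp \<tau> (map (\<lambda>x. {x}) es @ replicate (n - length es) V)"
    and none: "length es = 0 \<longleftrightarrow> set js \<subseteq> {None}" "length es = n \<longleftrightarrow> None \<notin> set js"
    using gen_prod_indices_normal_form[OF assms] .
  consider "length es = 0" | "length es = n" | "0 < length es \<and> length es < n" using es(2) by linarith
  then show ?thesis
  proof cases
    case 1
    have "gp \<tau> (map (\<lambda>x. {x}) es @ replicate (n - length es) V) = gp id (replicate n V)"
      using 1 permutes_less[OF \<tau>] by (intro gen_prod_cong[OF \<tau> permutes_id]) simp
    then show ?thesis using V_product eq none(1) 1 by auto
  next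
    case 2
    define zs0 where "zs0 = permute_list \<tau> es"
    have \<tau>e: "\<tau> permutes {..<length es}" using \<tau> 2 by simp
    have zs0: "length zs0 = n" "set zs0 \<subseteq> B" using 2 es(1) by (auto simp: zs0_def \<tau>e)
    have gp_sub: "gp \<tau> (map (\<lambda>x. {x}) es @ replicate (n - length es) V) \<subseteq> T"
      if "subspace T" "mul zs0 \<in> T" for T
    proof (rule gen_prod_subset[OF \<tau> that(1)])
      fix zs assume "length zs = n" "\<forall>p<n. zs ! p \<in> (map (\<lambda>x. {x}) es @ replicate (n - length es) V) ! \<tau> p"
      then have "zs = zs0"
        using 2 permutes_less[OF \<tau>] by (intro nth_equalityI) (auto simp: zs0_def permute_list_nth[OF \<tau>e])
      then show "mul zs \<in> T" using that(2) by simp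
    qed
    from basis_product[rule_format, OF zs0] show ?thesis
    proof
      assume "\<exists>e\<in>B. mul zs0 \<in> line scale e"
      then show ?thesis using gp_sub[OF subspace_line] eq by blast
    next
      assume "mul zs0 \<in> V"
      then show ?thesis using gp_sub[OF subspace_V] eq none(2) 2 by blast
    qed
  next
    case 3
    then show ?thesis using basis_V_product \<tau> es(1) eq by auto
  qed
qed

lemma gen_prod_indices_subset_line:
  assumes \<sigma>: "\<sigma> permutes {..<n}" and js: "length js = n" "set js \<subseteq> idx_set B"
    and x: "x \<in> gp \<sigma> (map (u_of V) js)" "x \<noteq> 0" "x \<in> line scale y" and y: "y \<in> B"
  shows "gp \<sigma> (map (u_of V) js) \<subseteq> line scale y"
  using gen_prod_indices_cases[OF \<sigma> js]
proof (elim disjE conjE bexE)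
  fix e assume "e \<in> B" "gp \<sigma> (map (u_of V) js) \<subseteq> line scale e"
  moreover from this have "e = y" using basis_elem_unique_line[OF _ y x(2) _ x(3)] x(1) by blast
  ultimately show ?thesis by simp
qed (use line_inter_V[OF y] x in blast)+

lemma product_mem_gen_prod_indices:
  assumes zs: "length zs = n" "set zs \<subseteq> B \<union> V" "z \<in> set zs" and z: "z \<in> B"
  obtains \<sigma> ks where "\<sigma> permutes {..<n}" "length ks = n - 1" "set ks \<subseteq> idx_set B"
    "mul zs \<in> gp \<sigma> (map (u_of V) (Some z # ks))"
proof -
  define tag where "tag w = (if w \<in> B then Some w else None)" for w
  obtain p where p: "p < n" "zs ! p = z" using zs(1,3) by (metis in_set_conv_nth)
  define xs where "xs = z # take p zs @ drop (Suc p) zs"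
  have "mset zs = mset xs"
    using arg_cong[OF id_take_nth_drop[of p zs], of mset] p zs(1) by (simp add: xs_def)
  then obtain \<sigma> where \<sigma>0: "\<sigma> permutes {..<length xs}" "permute_list \<sigma> xs = zs"
    using mset_eq_permutation by metis
  have lx: "length xs = n" using zs(1) p(1) by (simp add: xs_def)
  have \<sigma>: "\<sigma> permutes {..<n}" using \<sigma>0(1) lx by simp
  define ks where "ks = map tag (take p zs @ drop (Suc p) zs)"
  have js: "map tag xs = Some z # ks" using z by (simp add: xs_def ks_def tag_def)
  have ks: "length ks = n - 1" "set ks \<subseteq> idx_set B" using zs(1) p(1) by (auto simp: ks_def tag_def idx_set_def)
  have "mul zs \<in> gp \<sigma> (map (u_of V) (Some z # ks))"
  proof (rule mul_mem_gen_prod[OF \<sigma> zs(1)], intro allI impI)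
    fix q assume q: "q < n"
    have "xs ! \<sigma> q \<in> B \<union> V"
      using zs(2) \<sigma>0(2) permutes_less[OF \<sigma> q] lx set_permute_list[OF \<sigma>0(1)] nth_mem by (metis subsetD)
    then have "xs ! \<sigma> q \<in> u_of V (map tag xs ! \<sigma> q)"
      using permutes_less[OF \<sigma> q] lx by (auto simp: tag_def u_of_def)
    moreover have "zs ! q = xs ! \<sigma> q" using permute_list_nth[OF \<sigma>0(1), of q] \<sigma>0(2) lx q by simp
    moreover have "map (u_of V) (Some z # ks) ! \<sigma> q = u_of V (map tag xs ! \<sigma> q)"
      using permutes_less[OF \<sigma> q] lx by (simp flip: js)
    ultimately show "zs ! q \<in> map (u_of V) (Some z # ks) ! \<sigma> q" by simp
  qed
  then show thesis using that[OF \<sigma> ks] by blast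
qed

lemma product_basis_V_cases:
  assumes "length zs = n" "set zs \<subseteq> B \<union> V"
  shows "(\<exists>e\<in>B. mul zs \<in> line scale e) \<or> (mul zs \<in> V \<and> set zs \<subseteq> B) \<or> set zs \<subseteq> V"
proof -
  define js where "js = map (\<lambda>z. if z \<in> B then Some z else None) zs"
  have js: "length js = n" "set js \<subseteq> idx_set B" using assms(1) by (auto simp: js_def idx_set_def)
  have "\<forall>p<n. zs ! p \<in> B \<union> V" using assms nth_mem by blast
  then have "mul zs \<in> gp id (map (u_of V) js)"
    using assms(1) by (intro mul_mem_gen_prod[OF permutes_id assms(1)]) (auto simp: js_def u_of_def)
  moreover have "None \<notin> set js \<Longrightarrow> set zs \<subseteq> B" by (auto simp: js_def split: if_splits)
  moreover have "set js \<subseteq> {None} \<Longrightarrow> \<forall>z\<in>set zs. z \<notin> B" by (auto simp: js_def)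
  then have "set js \<subseteq> {None} \<Longrightarrow> set zs \<subseteq> V" using assms(2) by blast
  ultimately show ?thesis using gen_prod_indices_cases[OF permutes_id js] by blast
qed

lemma exists_nonzero_gen_prod:
  "gp \<sigma> As \<noteq> {0} \<Longrightarrow> \<exists>x\<in>gp \<sigma> As. x \<noteq> 0"
  using subspace_0[OF subspace_gen_prod] by blast

lemma a_map_eq_None:
  assumes "gp \<sigma> (map (u_of V) js) \<noteq> {0}" "gp \<sigma> (map (u_of V) js) \<subseteq> V"
  shows "a_map scale n mul V B \<sigma> js = {None}"
proof -
  have "\<not> (r \<in> B \<and> gp \<sigma> (map (u_of V) js) \<subseteq> line scale r)" for r
    using exists_nonzero_gen_prod[OF assms(1)] assms(2) line_inter_V by blast
  then show ?thesis using assms unfolding a_map_def Let_def by auto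
qed

lemma a_map_eq_Some:
  assumes "gp \<sigma> (map (u_of V) js) \<noteq> {0}" "gp \<sigma> (map (u_of V) js) \<subseteq> line scale r" "r \<in> B"
  shows "a_map scale n mul V B \<sigma> js = {Some r}"
proof -
  obtain x where x: "x \<in> gp \<sigma> (map (u_of V) js)" "x \<noteq> 0" using exists_nonzero_gen_prod[OF assms(1)] by blast
  have "\<not> gp \<sigma> (map (u_of V) js) \<subseteq> V" using x assms(2,3) line_inter_V by blast
  moreover have "r' \<in> B \<and> gp \<sigma> (map (u_of V) js) \<subseteq> line scale r' \<longleftrightarrow> r' = r" for r'
    using x assms(2,3) basis_elem_unique_line by blast
  ultimately show ?thesis using assms unfolding a_map_def Let_def by auto
qed

end

locale gLt_qm_algebra = gLt_algebra + qm_algebra +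
  assumes mu_qm: "mu_quasi_mult scale n mul V B"
begin

lemma mu_quasi_multD:
  "e \<in> B \<Longrightarrow> k1 \<in> idx_set B \<Longrightarrow> set ks \<subseteq> idx_set B \<Longrightarrow> length ks = n - 1 \<Longrightarrow>
    Some e \<in> mu_map scale n mul V B b1 k1 b2 ks \<Longrightarrow>
    \<exists>\<sigma>. \<sigma> permutes {..<n} \<and> e \<in> gp \<sigma> (map (u_of V) (k1 # ks))"
  using mu_qm unfolding mu_quasi_mult_def by blast

text \<open>The classes of the generated equivalence relation on \<open>B\<close> give the
  bases of the minimal ideals.\<close>

definition linked :: "'b \<Rightarrow> 'b \<Rightarrow> bool" where
  "linked x y \<longleftrightarrow> x \<in> B \<and> y \<in> B \<and>
    (\<exists>zs s. length zs = n \<and> set zs \<subseteq> B \<union> V \<and> x \<in> set zs \<and> s \<noteq> 0 \<and> mul zs = s *s y)"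

definition connected :: "('b \<times> 'b) set" where
  "connected = ({(x, y). linked x y} \<union> {(x, y). linked x y}\<inverse>)\<^sup>* \<inter> B \<times> B"

lemma equiv_connected: "equiv B connected"
proof (rule equivI)
  let ?S = "{(x, y). linked x y} \<union> {(x, y). linked x y}\<inverse>"
  show "connected \<subseteq> B \<times> B" "refl_on B connected" by (auto simp: connected_def refl_on_def)
  have "sym (?S\<^sup>*)" by (rule sym_rtrancl) (auto simp: sym_def)
  then show "sym connected" unfolding connected_def by (intro sym_Int) (auto simp: sym_def)
  show "trans connected" unfolding connected_def by (intro trans_Int trans_rtrancl) (auto simp: trans_def)
qed

lemma linked_connected:
  assumes "linked x y"
  shows "(x, y) \<in> connected"
proof -
  have "(x, y) \<in> ({(x, y). linked x y} \<union> {(x, y). linked x y}\<inverse>)\<^sup>*"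
    using assms by (intro r_into_rtrancl) simp
  then show ?thesis using assms by (simp add: connected_def linked_def)
qed

lemma class_subset_B: "C \<in> B // connected \<Longrightarrow> C \<subseteq> B"
  using in_quotient_imp_subset[OF equiv_connected] .

lemma class_nonempty: "C \<in> B // connected \<Longrightarrow> C \<noteq> {}"
  using in_quotient_imp_non_empty[OF equiv_connected] .

lemma class_closed: "C \<in> B // connected \<Longrightarrow> x \<in> C \<Longrightarrow> (x, y) \<in> connected \<Longrightarrow> y \<in> C"
  using in_quotient_imp_closed[OF equiv_connected] .

lemma class_closed': "C \<in> B // connected \<Longrightarrow> x \<in> C \<Longrightarrow> (y, x) \<in> connected \<Longrightarrow> y \<in> C"
  using class_closed equiv_connected by (meson equivE symD)

lemma class_connected: "C \<in> B // connected \<Longrightarrow> x \<in> C \<Longrightarrow> y \<in> C \<Longrightarrow> (x, y) \<in> connected"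
  using in_quotient_imp_in_rel[OF equiv_connected] by blast

lemma classes_disjoint: "C \<in> B // connected \<Longrightarrow> C' \<in> B // connected \<Longrightarrow> C \<noteq> C' \<Longrightarrow> C \<inter> C' = {}"
  using quotient_disj[OF equiv_connected] by blast

lemma class_of: "b \<in> B \<Longrightarrow> connected `` {b} \<in> B // connected \<and> b \<in> connected `` {b}"
  using quotientI equiv_class_self[OF equiv_connected] by metis

lemma basis_elem_in_gen_prod_realized:
  assumes \<sigma>: "\<sigma> permutes {..<n}" and js: "length js = n" "set js \<subseteq> idx_set B"
    and c: "c \<in> B" "c \<in> gp \<sigma> (map (u_of V) js)"
  obtains zs s where "length zs = n" "set zs \<subseteq> B \<union> V" "s \<noteq> 0" "mul zs = s *s c"
    "\<And>b. Some b \<in> set js \<Longrightarrow> b \<in> set zs"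
proof -
  have c0: "c \<noteq> 0" using c(1) zero_notin_B by auto
  have "c \<in> line scale c" using scale_one[of c] by (metis mem_line_iff)
  then have "gp \<sigma> (map (u_of V) js) \<subseteq> line scale c"
    using gen_prod_indices_subset_line[OF \<sigma> js c(2) c0 _ c(1)] by blast
  moreover have "c \<in> span {mul zs | zs. length zs = n \<and> (\<forall>p<n. zs ! p \<in> map (u_of V) js ! \<sigma> p)}"
    using c(2) gen_prod_eq_span[OF \<sigma>] by simp
  then obtain x where x: "x \<in> {mul zs | zs. length zs = n \<and> (\<forall>p<n. zs ! p \<in> map (u_of V) js ! \<sigma> p)}"
    "x \<noteq> 0"
    using span_nonzero_generator c0 by blast
  then obtain zs where zs: "length zs = n" "\<forall>p<n. zs ! p \<in> map (u_of V) js ! \<sigma> p" "x = mul zs" by blast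
  ultimately have "mul zs \<in> line scale c"
    using mul_mem_gen_prod[where mul = mul, OF \<sigma> zs(1,2)] by blast
  then obtain s where s: "mul zs = s *s c" by (auto simp: mem_line_iff)
  then have "s \<noteq> 0" using x(2) zs(3) by auto
  moreover have "b \<in> set zs" if b: "Some b \<in> set js" for b
  proof -
    obtain i where i: "i < n" "js ! i = Some b" using b js(1) by (metis in_set_conv_nth)
    then have "zs ! inv \<sigma> i = b" by (rule gen_prod_indices_generator(2)[OF \<sigma> js zs(1,2)])
    then show ?thesis using permutes_inv_less[OF \<sigma> i(1)] zs(1) by (metis nth_mem)
  qed
  ultimately show thesis using that[OF zs(1) gen_prod_indices_generator(1)[OF \<sigma> js zs(1,2)] _ s] by blast
qed

text \<open>A nonzero product of basis elements lying in \<open>V\<close> connects all its arguments: its first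
  argument \<open>c\<close> belongs to \<open>\<mu>\<close> of the barred index \<open>v\<close> and the barred indices of the others, so
  \<open>\<mu>\<close>-quasi-multiplicativity realizes \<open>c\<close> as a product containing the remaining arguments.\<close>

lemma V_product_connected:
  assumes zs: "length zs = n" "set zs \<subseteq> B" "mul zs \<in> V" "mul zs \<noteq> 0" and z: "z \<in> set zs"
  shows "(z, hd zs) \<in> connected"
proof -
  obtain c bs where cbs: "zs = c # bs" using zs(1) n_ge_2 by (cases zs) auto
  have lbs: "length bs = n - 1" and cB: "c \<in> B" and bsB: "set bs \<subseteq> B" using zs(1,2) cbs by auto
  have P: "gp id (map (u_of V) (Some c # map Some bs)) = span {mul zs}"
    using gen_prod_id_singletons[OF zs(1)] cbs by (simp add: u_of_def comp_def)
  have "gp id (map (u_of V) (Some c # map Some bs)) \<noteq> {0}" "gp id (map (u_of V) (Some c # map Some bs)) \<subseteq> V"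
    unfolding P using zs(3,4) span_base[of "mul zs"] span_minimal[OF _ subspace_V] by auto
  then have "a_map scale n mul V B id (Some c # map Some bs) = {None}" by (rule a_map_eq_None)
  then have "Some c \<in> b_map scale n mul V B id None (map Some bs)"
    using cB by (simp add: b_map_def idx_set_def)
  then have "Some c \<in> mu_map scale n mul V B False None True (map Some bs)"
    by (simp add: mu_map_def) (metis permutes_id)
  moreover have idx: "None \<in> idx_set B" "set (map Some bs) \<subseteq> idx_set B" "length (map Some bs) = n - 1"
    using lbs bsB by (auto simp: idx_set_def)
  ultimately obtain \<sigma> where \<sigma>: "\<sigma> permutes {..<n}" "c \<in> gp \<sigma> (map (u_of V) (None # map Some bs))"
    using mu_quasi_multD[OF cB idx] by blast
  moreover have "length (None # map Some bs) = n" "set (None # map Some bs) \<subseteq> idx_set B"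
    using idx n_ge_2 by auto
  ultimately obtain zs' s where zs': "length zs' = n" "set zs' \<subseteq> B \<union> V" "s \<noteq> 0" "mul zs' = s *s c"
    "\<And>b. Some b \<in> set (None # map Some bs) \<Longrightarrow> b \<in> set zs'"
    using basis_elem_in_gen_prod_realized[OF \<sigma>(1) _ _ cB \<sigma>(2)] by blast
  show ?thesis
  proof (cases "z = c")
    case True
    then show ?thesis using cB cbs equiv_connected by (simp add: equiv_def refl_on_def)
  next
    case False
    then have "z \<in> set zs'" using z cbs zs'(5) by auto
    then have "linked z c" using z cbs zs' bsB cB unfolding linked_def by auto
    then show ?thesis using linked_connected cbs by simp
  qed
qed

lemma V_product_subset_class:
  assumes "length zs = n" "set zs \<subseteq> B" "mul zs \<in> V" "mul zs \<noteq> 0"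
    and C: "C \<in> B // connected" and "z \<in> set zs" "z \<in> C"
  shows "set zs \<subseteq> C"
proof
  fix w assume "w \<in> set zs"
  have "hd zs \<in> C" using V_product_connected[OF assms(1-4,6)] class_closed[OF C assms(7)] by blast
  then show "w \<in> C" using V_product_connected[OF assms(1-4) \<open>w \<in> set zs\<close>] class_closed'[OF C] by blast
qed

definition V_gens :: "'b set \<Rightarrow> 'b set" where
  "V_gens C = {mul es | es. length es = n \<and> set es \<subseteq> C \<and> mul es \<in> V}"

definition V_of :: "'b set \<Rightarrow> 'b set" where
  "V_of C = span (V_gens C)"

definition ideal_of :: "'b set \<Rightarrow> 'b set" where
  "ideal_of C = setsum (V_of C) (span C)"

lemma ideal_of_eq_span: "ideal_of C = span (C \<union> V_gens C)"
  unfolding ideal_of_def V_of_def setsum_def span_Un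
proof (intro equalityI subsetI)
  fix x assume "x \<in> {a + b |a b. a \<in> span (V_gens C) \<and> b \<in> span C}"
  then obtain a b where "x = b + a" "a \<in> span (V_gens C)" "b \<in> span C" by (auto simp: add.commute)
  then show "x \<in> {x + y |x y. x \<in> span C \<and> y \<in> span (V_gens C)}" by blast
next
  fix x assume "x \<in> {x + y |x y. x \<in> span C \<and> y \<in> span (V_gens C)}"
  then obtain a b where "x = b + a" "a \<in> span (V_gens C)" "b \<in> span C" by blast
  then show "x \<in> {a + b |a b. a \<in> span (V_gens C) \<and> b \<in> span C}" by (auto simp: add.commute)
qed

lemma subspace_ideal_of: "subspace (ideal_of C)"
  by (simp add: ideal_of_eq_span)

lemma subset_ideal_of: "C \<subseteq> ideal_of C" "V_gens C \<subseteq> ideal_of C" "span C \<subseteq> ideal_of C"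
    "V_of C \<subseteq> ideal_of C"
  unfolding ideal_of_eq_span V_of_def using span_superset by (auto intro: span_mono[THEN subsetD])

lemma V_gens_subset_V: "V_gens C \<subseteq> V"
  unfolding V_gens_def by blast

lemma V_of_subset_V: "V_of C \<subseteq> V"
  unfolding V_of_def using span_minimal[OF V_gens_subset_V subspace_V] .

lemma ideal_of_subset_L: "C \<subseteq> B \<Longrightarrow> ideal_of C \<subseteq> L"
  unfolding ideal_of_eq_span using B_subset_L V_subset_L V_gens_subset_V
  by (intro span_minimal[OF _ subspace_L]) blast

lemma homogeneous_V_gens: "C \<subseteq> B \<Longrightarrow> x \<in> V_gens C \<Longrightarrow> \<exists>g. x \<in> Lg g"
  unfolding V_gens_def using homogeneous_B homogeneous_mul nth_mem by blast

lemma V_of_inter_span: "C \<subseteq> B \<Longrightarrow> V_of C \<inter> span C = {0}"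
proof -
  assume "C \<subseteq> B"
  then have "V_of C \<inter> span C \<subseteq> V \<inter> span B" using V_of_subset_V span_mono[of C B] by blast
  moreover have "0 \<in> V_of C \<inter> span C" by (simp add: V_of_def span_zero)
  ultimately show ?thesis using V_inter_span_B by blast
qed

lemma ideal_of_components:
  assumes "C \<subseteq> B" "x \<in> ideal_of C"
  obtains v w where "x = v + w" "v \<in> V_of C" "w \<in> span C" "v \<in> V" "w \<in> span B"
  using assms V_of_subset_V span_mono[OF assms(1)] unfolding ideal_of_def setsum_def by blast

lemma ideal_of_inter_B: "C \<subseteq> B \<Longrightarrow> e \<in> B \<Longrightarrow> e \<in> ideal_of C \<Longrightarrow> e \<in> C"
proof -
  assume C: "C \<subseteq> B" and e: "e \<in> B" "e \<in> ideal_of C"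
  obtain v w where vw: "e = v + w" "w \<in> span C" "v \<in> V" "w \<in> span B"
    using ideal_of_components[OF C e(2)] by metis
  have "v \<in> span B" using vw(1,4) span_diff[OF span_base[OF e(1)] vw(4)] by (simp add: algebra_simps)
  then have "v = 0" using vw(3) V_inter_span_B by blast
  then show "e \<in> C" using vw mem_span_subset_B[OF C e(1)] by simp
qed

lemma ideal_of_inter_V: "C \<subseteq> B \<Longrightarrow> x \<in> V \<Longrightarrow> x \<in> ideal_of C \<Longrightarrow> x \<in> V_of C"
proof -
  assume C: "C \<subseteq> B" and x: "x \<in> V" "x \<in> ideal_of C"
  obtain v w where vw: "x = v + w" "v \<in> V_of C" "v \<in> V" "w \<in> span B"
    using ideal_of_components[OF C x(2)] by metis
  have "w \<in> V" using vw(1,3) subspace_diff[OF subspace_V x(1) vw(3)] by (simp add: algebra_simps)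
  then have "w = 0" using vw(4) V_inter_span_B by blast
  then show "x \<in> V_of C" using vw by simp
qed

lemma basis_V_product_cases:
  assumes "length ys = n" "set ys \<subseteq> B \<union> V" "c \<in> set ys" "c \<in> B"
  shows "mul ys = 0 \<or> (\<exists>e\<in>B. mul ys \<in> line scale e \<and> (\<forall>b\<in>set ys \<inter> B. (b, e) \<in> connected)) \<or>
    (set ys \<subseteq> B \<and> mul ys \<in> V \<and> (\<forall>b\<in>set ys. (b, hd ys) \<in> connected))"
  using product_basis_V_cases[OF assms(1,2)]
proof (elim disjE conjE bexE)
  fix e assume e: "e \<in> B" "mul ys \<in> line scale e"
  then obtain s where s: "mul ys = s *s e" by (auto simp: mem_line_iff)
  have "linked b e" if "b \<in> set ys \<inter> B" "s \<noteq> 0" for b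
    using that assms(1,2) e(1) s unfolding linked_def by blast
  then show ?thesis using e s linked_connected by (cases "s = 0") auto
next
  assume "mul ys \<in> V" "set ys \<subseteq> B"
  then show ?thesis using V_product_connected[OF assms(1)] by blast
qed (use assms(3,4) B_disjoint_V in blast)

lemma mul_mem_ideal_of_basis_entry:
  assumes C: "C \<in> B // connected" and zs: "length zs = n" "set zs \<subseteq> L" "p < n" "zs ! p \<in> C"
  shows "mul zs \<in> ideal_of C"
proof (rule mul_mem_subspace_by_basis[OF subspace_ideal_of _ zs(1,2), of "{p}"])
  fix ys assume ys: "length ys = n" "set ys \<subseteq> B \<union> V" "\<forall>r\<in>{p}. ys ! r = zs ! r"
  have c: "ys ! p \<in> set ys" "ys ! p \<in> C" using ys(1,3) zs(3,4) nth_mem[of p ys] by auto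
  have "ys ! p \<in> B" using c(2) class_subset_B[OF C] by blast
  from basis_V_product_cases[OF ys(1,2) c(1) this]
  show "mul ys \<in> ideal_of C"
  proof (elim disjE conjE bexE)
    fix e assume e: "e \<in> B" "mul ys \<in> line scale e" "\<forall>b\<in>set ys \<inter> B. (b, e) \<in> connected"
    then have "e \<in> C" using c class_closed[OF C] class_subset_B[OF C] by blast
    then have "line scale e \<subseteq> ideal_of C"
      using subset_ideal_of(3) span_mono[of "{e}" C] by (auto simp: line_eq_span)
    then show ?thesis using e(2) by blast
  next
    assume "set ys \<subseteq> B" "mul ys \<in> V" "\<forall>b\<in>set ys. (b, hd ys) \<in> connected"
    moreover from this have "set ys \<subseteq> C" using c class_closed[OF C] class_closed'[OF C] by blast
    ultimately show ?thesis using ys(1) subset_ideal_of(2) unfolding V_gens_def by blast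
  qed (simp add: subspace_0[OF subspace_ideal_of])
qed (use zs class_subset_B[OF C] in auto)

lemma mul_eq_0_basis_entries:
  assumes C: "C \<in> B // connected" "C' \<in> B // connected" "C \<noteq> C'"
    and zs: "length zs = n" "set zs \<subseteq> L" "p < n" "p' < n" "zs ! p \<in> C" "zs ! p' \<in> C'"
  shows "mul zs = 0"
proof -
  have "mul zs \<in> {0}"
  proof (rule mul_mem_subspace_by_basis[OF subspace_single_0 _ zs(1,2), of "{p, p'}"])
    fix ys assume ys: "length ys = n" "set ys \<subseteq> B \<union> V" "\<forall>r\<in>{p, p'}. ys ! r = zs ! r"
    have c: "ys ! p \<in> set ys" "ys ! p \<in> C" "ys ! p' \<in> set ys" "ys ! p' \<in> C'"
      using ys(1,3) zs(3-6) nth_mem[of p ys] nth_mem[of p' ys] by auto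
    have dis: "C \<inter> C' = {}" by (rule classes_disjoint[OF C])
    have "ys ! p \<in> B" using c(2) class_subset_B[OF C(1)] by blast
    from basis_V_product_cases[OF ys(1,2) c(1) this]
    show "mul ys \<in> {0}"
    proof (elim disjE conjE bexE)
      fix e assume "e \<in> B" "mul ys \<in> line scale e" "\<forall>b\<in>set ys \<inter> B. (b, e) \<in> connected"
      then have "e \<in> C" "e \<in> C'"
        using c class_closed[OF C(1)] class_closed[OF C(2)] class_subset_B[OF C(1)] class_subset_B[OF C(2)]
        by blast+
      then show ?thesis using dis by blast
    next
      assume "set ys \<subseteq> B" "mul ys \<in> V" "\<forall>b\<in>set ys. (b, hd ys) \<in> connected"
      then have "hd ys \<in> C" "hd ys \<in> C'" using c class_closed[OF C(1)] class_closed[OF C(2)] by blast+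
      then show ?thesis using dis by blast
    qed simp
  qed (use zs class_subset_B[OF C(1)] class_subset_B[OF C(2)] in auto)
  then show ?thesis by simp
qed

lemma V_gens_product:
  assumes "C \<in> B // connected" "x \<in> V_gens C"
  obtains es where "x = mul es" "length es = n" "set es \<subseteq> C" "set es \<subseteq> L" "\<forall>w\<in>set es. \<exists>g. w \<in> Lg g"
proof -
  obtain es where es: "x = mul es" "length es = n" "set es \<subseteq> C" using assms(2) unfolding V_gens_def by blast
  then have "set es \<subseteq> B" using class_subset_B[OF assms(1)] by blast
  then show thesis using that[OF es] B_subset_L homogeneous_B es(2) nth_mem by blast
qed

lemma mul_eq_0_basis_V_gens_entries:
  assumes C: "C \<in> B // connected" "C' \<in> B // connected" "C \<noteq> C'"
    and zs: "length zs = n" "set zs \<subseteq> L" "p < n" "p' < n" "p \<noteq> p'" "zs ! p \<in> C" "zs ! p' \<in> V_gens C'"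
  shows "mul zs = 0"
proof -
  obtain es where es: "zs ! p' = mul es" "length es = n" "set es \<subseteq> C'" "set es \<subseteq> L"
    "\<forall>x\<in>set es. \<exists>g. x \<in> Lg g"
    using V_gens_product[OF C(2) zs(7)] by metis
  have "mul zs \<in> {0}"
  proof (rule mul_mem_subspace_by_expansion[OF subspace_single_0 zs(1,2) zs(4) es(1,2,4,5), where F = "{p}"])
    show "{p} \<subseteq> {..<n}" "\<forall>r\<in>{p}. \<exists>g. zs ! r \<in> Lg g"
      using zs(3,6) class_subset_B[OF C(1)] homogeneous_B by auto
    fix Il Ol i j assume Il: "length Il = n" "set Il \<subseteq> L" "j < n" "Il ! j \<in> set es"
      "\<forall>r\<in>{p} - {p'}. \<exists>q<n. q \<noteq> j \<and> Il ! q = zs ! r"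
      and Ol: "length Ol = n" "set Ol \<subseteq> L" "i < n" "Ol ! i = mul Il"
    obtain q where q: "q < n" "q \<noteq> j" "Il ! q = zs ! p" using Il(5) zs(5) by auto
    have "mul Il = 0"
      using mul_eq_0_basis_entries[OF C(2,1) C(3)[symmetric] Il(1,2,3) q(1)] Il(4) es(3) q(2,3) zs(6) by auto
    then show "mul Ol \<in> {0}" using mul_eq_0_if_nth_0[OF Ol(1-3)] Ol(4) by simp
  qed
  then show ?thesis by simp
qed

lemma mul_mem_ideal_of_V_gens_entry:
  assumes C: "C \<in> B // connected" and zs: "length zs = n" "set zs \<subseteq> L" "p < n" "zs ! p \<in> V_gens C"
  shows "mul zs \<in> ideal_of C"
proof -
  obtain es where es: "zs ! p = mul es" "length es = n" "set es \<subseteq> C" "set es \<subseteq> L"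
    "\<forall>x\<in>set es. \<exists>g. x \<in> Lg g"
    using V_gens_product[OF C zs(4)] by metis
  show ?thesis
  proof (rule mul_mem_subspace_by_expansion[OF subspace_ideal_of zs(1-3) es(1,2,4,5), where F = "{}"])
    fix Il Ol i j assume Ol: "length Ol = n" "set Ol \<subseteq> L" "i < n" "\<forall>q<n. q \<noteq> i \<longrightarrow> Ol ! q \<in> set es"
    define q :: nat where "q = (if i = 0 then 1 else 0)"
    have "q < n" "q \<noteq> i" using n_ge_2 by (auto simp: q_def)
    then show "mul Ol \<in> ideal_of C" using mul_mem_ideal_of_basis_entry[OF C Ol(1,2)] Ol(4) es(3) by blast
  qed auto
qed

lemma mul_mem_ideal_of_ideal_entry:
  assumes C: "C \<in> B // connected" and zs: "length zs = n" "set zs \<subseteq> L" "p < n" "zs ! p \<in> ideal_of C"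
  shows "mul zs \<in> ideal_of C"
proof (rule mul_mem_subspace_by_generator[OF subspace_ideal_of zs(1-3)])
  show CL: "C \<union> V_gens C \<subseteq> L"
    using ideal_of_subset_L[OF class_subset_B[OF C]] subset_ideal_of(1,2) by blast
  show "zs ! p \<in> span (C \<union> V_gens C)" using zs(4) ideal_of_eq_span by simp
  fix a assume a: "a \<in> C \<union> V_gens C"
  moreover have "a \<in> L" using a ideal_of_subset_L[OF class_subset_B[OF C]] subset_ideal_of(1,2) by blast
  ultimately show "mul (zs[p := a]) \<in> ideal_of C"
    using mul_mem_ideal_of_basis_entry[OF C] mul_mem_ideal_of_V_gens_entry[OF C] zs(1,3)
      set_update_subset_L[OF zs(2)] by auto
qed

lemma mul_eq_0_V_gens_entries:
  assumes C: "C \<in> B // connected" "C' \<in> B // connected" "C \<noteq> C'"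
    and zs: "length zs = n" "set zs \<subseteq> L" "p < n" "p' < n" "p \<noteq> p'" "zs ! p \<in> V_gens C"
      "zs ! p' \<in> V_gens C'"
  shows "mul zs = 0"
proof -
  obtain es where es: "zs ! p = mul es" "length es = n" "set es \<subseteq> C" "set es \<subseteq> L"
    "\<forall>x\<in>set es. \<exists>g. x \<in> Lg g"
    using V_gens_product[OF C(1) zs(6)] by metis
  have "mul zs \<in> {0}"
  proof (rule mul_mem_subspace_by_expansion[OF subspace_single_0 zs(1-3) es(1,2,4,5), where F = "{p'}"])
    show "{p'} \<subseteq> {..<n}" "\<forall>r\<in>{p'}. \<exists>g. zs ! r \<in> Lg g"
      using zs(4,7) homogeneous_V_gens[OF class_subset_B[OF C(2)]] by auto
    fix Il Ol i j assume Il: "length Il = n" "set Il \<subseteq> L" "j < n" "Il ! j \<in> set es"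
      "\<forall>r\<in>{p'} - {p}. \<exists>q<n. q \<noteq> j \<and> Il ! q = zs ! r"
      and Ol: "length Ol = n" "set Ol \<subseteq> L" "i < n" "Ol ! i = mul Il"
    obtain q where q: "q < n" "q \<noteq> j" "Il ! q = zs ! p'" using Il(5) zs(5) by auto
    have "mul Il = 0"
      using mul_eq_0_basis_V_gens_entries[OF C Il(1-3) q(1) q(2)[symmetric]] Il(4) es(3) q(3) zs(7) by auto
    then show "mul Ol \<in> {0}" using mul_eq_0_if_nth_0[OF Ol(1-3)] Ol(4) by simp
  qed
  then show ?thesis by simp
qed

lemma mul_eq_0_distinct_classes:
  assumes C: "C \<in> B // connected" "C' \<in> B // connected" "C \<noteq> C'"
    and zs: "length zs = n" "set zs \<subseteq> L" "p < n" "p' < n" "p \<noteq> p'" "zs ! p \<in> ideal_of C"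
      "zs ! p' \<in> ideal_of C'"
  shows "mul zs = 0"
proof -
  have G: "C \<union> V_gens C \<subseteq> L" "C' \<union> V_gens C' \<subseteq> L"
    using ideal_of_subset_L[OF class_subset_B[OF C(1)]] ideal_of_subset_L[OF class_subset_B[OF C(2)]]
      subset_ideal_of(1,2)[of C] subset_ideal_of(1,2)[of C'] by blast+
  have "mul zs \<in> {0}"
  proof (rule mul_mem_subspace_by_generator[OF subspace_single_0 zs(1,2,3) G(1)])
    show "zs ! p \<in> span (C \<union> V_gens C)" using zs(6) ideal_of_eq_span by simp
    fix a assume a: "a \<in> C \<union> V_gens C"
    have za: "length (zs[p := a]) = n" "set (zs[p := a]) \<subseteq> L" "zs[p := a] ! p' = zs ! p'"
      using zs(1,5) a G(1) set_update_subset_L[OF zs(2)] by auto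
    show "mul (zs[p := a]) \<in> {0}"
    proof (rule mul_mem_subspace_by_generator[OF subspace_single_0 za(1,2) zs(4) G(2)])
      show "zs[p := a] ! p' \<in> span (C' \<union> V_gens C')" using zs(7) za(3) ideal_of_eq_span by simp
      fix b assume b: "b \<in> C' \<union> V_gens C'"
      let ?ys = "zs[p := a, p' := b]"
      have ys: "length ?ys = n" "set ?ys \<subseteq> L" "?ys ! p = a" "?ys ! p' = b"
        using zs(1,3,4,5) b G(2) set_update_subset_L[OF za(2)] by auto
      have "mul ?ys = 0"
      proof (cases "a \<in> C"; cases "b \<in> C'")
        assume "a \<in> C" "b \<in> C'"
        then show ?thesis using mul_eq_0_basis_entries[OF C ys(1,2) zs(3,4)] ys(3,4) by simp
      next
        assume "a \<in> C" "b \<notin> C'"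
        then show ?thesis using mul_eq_0_basis_V_gens_entries[OF C ys(1,2) zs(3-5)] ys(3,4) b by simp
      next
        assume "a \<notin> C" "b \<in> C'"
        then show ?thesis
          using mul_eq_0_basis_V_gens_entries[OF C(2,1) C(3)[symmetric] ys(1,2) zs(4,3) zs(5)[symmetric]]
            ys(3,4) a by simp
      next
        assume "a \<notin> C" "b \<notin> C'"
        then show ?thesis using mul_eq_0_V_gens_entries[OF C ys(1,2) zs(3-5)] ys(3,4) a b by simp
      qed
      then show "mul ((zs[p := a])[p' := b]) \<in> {0}" by simp
    qed
  qed
  then show ?thesis by simp
qed

lemma graded_ideal_of: "C \<subseteq> B \<Longrightarrow> graded_subspace scale Lg (ideal_of C)"
  using homogeneous_B homogeneous_V_gens by (intro graded_subspace_spanI[OF ideal_of_eq_span]) blast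

lemma graded_V_of: "C \<subseteq> B \<Longrightarrow> graded_subspace scale Lg (V_of C)"
  using homogeneous_V_gens by (intro graded_subspace_spanI[OF V_of_def]) blast

lemma gLt_ideal_ideal_of:
  assumes C: "C \<in> B // connected"
  shows "gLt_ideal scale n mul L Lg (ideal_of C)"
proof (rule gLt_idealI)
  show "0 < n" "ideal_of C \<subseteq> L" "graded_subspace scale Lg (ideal_of C)"
    using n_ge_2 ideal_of_subset_L graded_ideal_of class_subset_B[OF C] by auto
  fix zs q assume zs: "length zs = n" "q < n" "zs ! q \<in> ideal_of C" "\<forall>r<n. r \<noteq> q \<longrightarrow> zs ! r \<in> L"
  have "set zs \<subseteq> L"
    using zs ideal_of_subset_L[OF class_subset_B[OF C]] by (metis in_set_conv_nth subsetD subsetI)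
  then show "mul zs \<in> ideal_of C" using mul_mem_ideal_of_ideal_entry[OF C zs(1) _ zs(2,3)] by blast
qed

lemma inherited_basis_ideal_of:
  assumes C: "C \<in> B // connected"
  shows "inherited_basis scale Lg V B (ideal_of C) (V_of C) C"
  using V_of_subset_V graded_V_of class_subset_B[OF C] class_nonempty[OF C] V_of_inter_span
  unfolding inherited_basis_def ideal_of_def by blast

lemma subspace_in_line_in_class:
  assumes C: "C \<in> B // connected" and P: "subspace P" "P \<subseteq> ideal_of C" "P \<subseteq> line scale e" "e \<in> B"
  shows "\<exists>e'\<in>C. P \<subseteq> line scale e'"
proof (cases "P = {0}")
  case True
  obtain c where "c \<in> C" using class_nonempty[OF C] by blast
  then show ?thesis using True subspace_0[OF subspace_line] by blast
next
  case False
  then have "e \<in> C"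
    using nonzero_subspace_of_line_contains[OF P(1,3)] P(2,4) ideal_of_inter_B[OF class_subset_B[OF C]] by blast
  then show ?thesis using P(3) by blast
qed

lemma class_basis_product:
  assumes C: "C \<in> B // connected" and es: "length es = n" "set es \<subseteq> C"
  shows "(\<exists>e\<in>C. mul es \<in> line scale e) \<or> mul es \<in> V_of C"
proof -
  have esB: "set es \<subseteq> B" using es(2) class_subset_B[OF C] by blast
  from basis_product[rule_format, OF es(1) esB] show ?thesis
  proof
    assume "\<exists>e\<in>B. mul es \<in> line scale e"
    then obtain e where e: "e \<in> B" "span {mul es} \<subseteq> line scale e"
      using span_minimal[OF _ subspace_line] by blast
    have "es ! 0 \<in> set es" using es(1) n_ge_2 by simp
    then have "es ! 0 \<in> C" using es(2) by blast
    moreover have "set es \<subseteq> L" "0 < n" using esB B_subset_L n_ge_2 by auto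
    ultimately have "mul es \<in> ideal_of C" using mul_mem_ideal_of_basis_entry[OF C es(1)] by blast
    then have "span {mul es} \<subseteq> ideal_of C" using span_minimal[OF _ subspace_ideal_of] by blast
    then show ?thesis
      using subspace_in_line_in_class[OF C _ _ e(2,1)] span_base[of "mul es" "{mul es}"] by blast
  next
    assume "mul es \<in> V"
    then show ?thesis using es unfolding V_of_def V_gens_def by (blast intro: span_base)
  qed
qed

lemma class_basis_V_of_product:
  assumes C: "C \<in> B // connected" and k: "0 < k" "k < n" and es: "length es = k" "set es \<subseteq> C"
    and \<sigma>: "\<sigma> permutes {..<n}"
  shows "\<exists>e\<in>C. gp \<sigma> (map (\<lambda>x. {x}) es @ replicate (n - k) (V_of C)) \<subseteq> line scale e"
proof -
  let ?As = "map (\<lambda>x. {x}) es @ replicate (n - k) (V_of C)"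
  have esB: "set es \<subseteq> B" using es(2) class_subset_B[OF C] by blast
  obtain e where e: "e \<in> B" "gp \<sigma> (map (\<lambda>x. {x}) es @ replicate (n - k) V) \<subseteq> line scale e"
    using basis_V_product[rule_format, OF k es(1) esB \<sigma>] by blast
  have "?As ! r \<subseteq> (map (\<lambda>x. {x}) es @ replicate (n - k) V) ! r" if "r < n" for r
    using V_of_subset_V es(1) that by (cases "r < k") (simp_all add: nth_append)
  then have "gp \<sigma> ?As \<subseteq> gp \<sigma> (map (\<lambda>x. {x}) es @ replicate (n - k) V)"
    by (intro gen_prod_mono[OF \<sigma>]) blast
  moreover have "gp \<sigma> ?As \<subseteq> ideal_of C"
  proof (rule gen_prod_subset[OF \<sigma> subspace_ideal_of])
    fix zs assume zs: "length zs = n" "\<forall>p<n. zs ! p \<in> ?As ! \<sigma> p"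
    have "0 < n" using k by simp
    then obtain q where q: "q < n" "\<sigma> q = 0" using permutes_inv_less[OF \<sigma>] by blast
    have "zs ! q \<in> ?As ! 0" using zs(2) q by metis
    then have "zs ! q = es ! 0" using k es(1) by (simp add: nth_append)
    then have zq: "zs ! q \<in> C" using k es nth_mem[of 0 es] by auto
    have AsL: "?As ! r \<subseteq> L" if "r < n" for r
    proof (cases "r < k")
      case True
      then have "?As ! r = {es ! r}" "es ! r \<in> set es" using es(1) by (simp_all add: nth_append)
      moreover have "es ! r \<in> L" using calculation(2) esB B_subset_L by blast
      ultimately show ?thesis by simp
    next
      case False
      then have "?As ! r = V_of C" using that es(1) by (simp add: nth_append)
      then show ?thesis using order_trans[OF V_of_subset_V V_subset_L] by simp
    qed
    have "set zs \<subseteq> L"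
    proof
      fix w assume "w \<in> set zs"
      then obtain r where r: "r < n" "w = zs ! r" using zs(1) by (auto simp: in_set_conv_nth)
      then show "w \<in> L" using zs(2) AsL[OF permutes_less[OF \<sigma> r(1)]] by blast
    qed
    then show "mul zs \<in> ideal_of C" using mul_mem_ideal_of_basis_entry[OF C zs(1) _ q(1) zq] by blast
  qed
  ultimately show ?thesis using subspace_in_line_in_class[OF C subspace_gen_prod _ _ e(1)] e(2) by blast
qed

lemma class_V_of_product:
  assumes C: "C \<in> B // connected"
  shows "(\<exists>e\<in>C. gp id (replicate n (V_of C)) \<subseteq> line scale e) \<or> gp id (replicate n (V_of C)) \<subseteq> V_of C"
proof -
  have sub: "gp id (replicate n (V_of C)) \<subseteq> gp id (replicate n V)"
    using V_of_subset_V by (intro gen_prod_mono[OF permutes_id]) auto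
  have ideal: "gp id (replicate n (V_of C)) \<subseteq> ideal_of C"
  proof (rule gen_prod_subset[OF permutes_id subspace_ideal_of])
    fix zs assume zs: "length zs = n" "\<forall>p<n. zs ! p \<in> replicate n (V_of C) ! id p"
    then have "set zs \<subseteq> V_of C" by (metis in_set_conv_nth nth_replicate id_apply subsetI)
    moreover have "zs ! 0 \<in> set zs" using zs(1) n_ge_2 by auto
    ultimately have "set zs \<subseteq> L" "zs ! 0 \<in> ideal_of C"
      using V_of_subset_V V_subset_L subset_ideal_of(4) by blast+
    moreover have "0 < n" using n_ge_2 by simp
    ultimately show "mul zs \<in> ideal_of C" using mul_mem_ideal_of_ideal_entry[OF C zs(1)] by blast
  qed
  from V_product show ?thesis
  proof
    assume "\<exists>e\<in>B. gp id (replicate n V) \<subseteq> line scale e"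
    then show ?thesis using subspace_in_line_in_class[OF C subspace_gen_prod ideal] sub by blast
  next
    assume "gp id (replicate n V) \<subseteq> V"
    then show ?thesis using sub ideal ideal_of_inter_V[OF class_subset_B[OF C]] by blast
  qed
qed

lemma quasi_mult_basis_ideal_of:
  assumes C: "C \<in> B // connected"
  shows "quasi_mult_basis scale n mul (ideal_of C) Lg (V_of C) C"
  unfolding quasi_mult_basis_def
proof (intro conjI)
  have CB: "C \<subseteq> B" by (rule class_subset_B[OF C])
  show "V_of C \<subseteq> ideal_of C" "C \<subseteq> ideal_of C" using subset_ideal_of by auto
  show "graded_subspace scale Lg (V_of C)" "C \<noteq> {}" "independent C" "\<forall>e\<in>C. \<exists>g. e \<in> Lg g"
    "ideal_of C = setsum (V_of C) (span C)" "V_of C \<inter> span C = {0}"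
    using graded_V_of[OF CB] class_nonempty[OF C] independent_mono[OF independent_B CB] homogeneous_B CB
      V_of_inter_span[OF CB] by (auto simp: ideal_of_def)
  show "\<forall>es. length es = n \<longrightarrow> set es \<subseteq> C \<longrightarrow> (\<exists>e\<in>C. mul es \<in> line scale e) \<or> mul es \<in> V_of C"
    using class_basis_product[OF C] by blast
  show "\<forall>k es \<sigma>. 0 < k \<longrightarrow> k < n \<longrightarrow> length es = k \<longrightarrow> set es \<subseteq> C \<longrightarrow> \<sigma> permutes {..<n} \<longrightarrow>
      (\<exists>e\<in>C. gp \<sigma> (map (\<lambda>x. {x}) es @ replicate (n - k) (V_of C)) \<subseteq> line scale e)"
    using class_basis_V_of_product[OF C] by blast
qed (rule class_V_of_product[OF C])

lemma linked_a_map: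
  assumes "linked z y"
  obtains \<sigma> ks where "\<sigma> permutes {..<n}" "length ks = n - 1" "set ks \<subseteq> idx_set B"
    "a_map scale n mul V B \<sigma> (Some z # ks) = {Some y}"
proof -
  obtain zs s where zs: "length zs = n" "set zs \<subseteq> B \<union> V" "z \<in> set zs" "s \<noteq> 0" "mul zs = s *s y"
    and zB: "z \<in> B" and yB: "y \<in> B" using assms unfolding linked_def by blast
  obtain \<sigma> ks where \<sigma>: "\<sigma> permutes {..<n}" and ks: "length ks = n - 1" "set ks \<subseteq> idx_set B"
    and P: "mul zs \<in> gp \<sigma> (map (u_of V) (Some z # ks))"
    using product_mem_gen_prod_indices[OF zs(1-3) zB] by blast
  have "mul zs \<noteq> 0" "mul zs \<in> line scale y" using zs(4,5) yB zero_notin_B by (auto simp: mem_line_iff)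
  moreover have "length (Some z # ks) = n" "set (Some z # ks) \<subseteq> idx_set B"
    using ks zB n_ge_2 by (auto simp: idx_set_def)
  ultimately show thesis
    using that[OF \<sigma> ks] a_map_eq_Some[OF _ _ yB] gen_prod_indices_subset_line[OF \<sigma> _ _ P _ _ yB] P by blast
qed

lemma gen_prod_indices_subset_ideal_of:
  assumes C: "C \<in> B // connected" and \<sigma>: "\<sigma> permutes {..<n}"
    and js: "length js = n" "set js \<subseteq> idx_set C" "Some c \<in> set js"
  shows "gp \<sigma> (map (u_of V) js) \<subseteq> ideal_of C"
proof (rule gen_prod_subset[OF \<sigma> subspace_ideal_of])
  have jsB: "set js \<subseteq> idx_set B" using js(2) class_subset_B[OF C] by (auto simp: idx_set_def)
  fix zs assume zs: "length zs = n" "\<forall>p<n. zs ! p \<in> map (u_of V) js ! \<sigma> p"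
  obtain i where i: "i < n" "js ! i = Some c" using js(1,3) by (metis in_set_conv_nth)
  have "c \<in> C" using js(2,3) by (auto simp: idx_set_def)
  moreover have "set zs \<subseteq> L" "zs ! inv \<sigma> i = c"
    using gen_prod_indices_generator[OF \<sigma> js(1) jsB zs] i B_subset_L V_subset_L by auto
  ultimately show "mul zs \<in> ideal_of C"
    using mul_mem_ideal_of_basis_entry[OF C zs(1) _ conjunct1[OF permutes_inv_less[OF \<sigma> i(1)]]] by simp
qed

lemma a_map_basis_None_ne:
  assumes e: "e \<in> B" and \<sigma>: "\<sigma> permutes {..<n}" and rest: "length rest = n - 1" "set rest \<subseteq> {None}"
  shows "a_map scale n mul V B \<sigma> (Some e # rest) \<noteq> {None}"
proof
  let ?P = "gp \<sigma> (map (u_of V) (Some e # rest))"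
  assume "a_map scale n mul V B \<sigma> (Some e # rest) = {None}"
  then have P: "?P \<noteq> {0}" "?P \<subseteq> V" unfolding a_map_def Let_def by auto
  have "rest \<noteq> []" using rest(1) n_ge_2 by auto
  then have "None \<in> set (Some e # rest)" using rest(2) by (cases rest) auto
  moreover have "length (Some e # rest) = n" "set (Some e # rest) \<subseteq> idx_set B"
    using rest n_ge_2 e by (auto simp: idx_set_def)
  note cases = gen_prod_indices_cases[OF \<sigma> this]
  have "\<not> set (Some e # rest) \<subseteq> {None}" by simp
  with cases \<open>None \<in> set (Some e # rest)\<close> obtain e' where "e' \<in> B" "?P \<subseteq> line scale e'" by blast
  then show False using P exists_nonzero_gen_prod line_inter_V by blast
qed

lemma Some_notin_mu_map_None:
  assumes "e \<in> B" "b1 \<or> b2" "set (k1 # ks) \<subseteq> {None}" "length ks = n - 1"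
  shows "Some e \<notin> mu_map scale n mul V B b1 k1 b2 ks"
proof
  assume mu: "Some e \<in> mu_map scale n mul V B b1 k1 b2 ks"
  have "length (k1 # take k ks @ drop (Suc k) ks) = n - 1" "ks ! k = None" if "k < n - 1" for k
  proof -
    show "length (k1 # take k ks @ drop (Suc k) ks) = n - 1" using that assms(4) n_ge_2 by simp
    have "ks ! k \<in> set ks" using that assms(4) by simp
    then show "ks ! k = None" using assms(3) by auto
  qed
  moreover have "set (k1 # take k ks @ drop (Suc k) ks) \<subseteq> {None}" for k
    using assms(3) set_delete_list[of k ks] by auto
  moreover have "k1 = None" "set ks \<subseteq> {None}" using assms(3) by auto
  ultimately show False
    using mu assms a_map_basis_None_ne[OF assms(1)]
    by (cases b1; cases b2) (auto simp: mu_map_def b_map_def)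
qed

end

locale tight_gLt_qm_algebra = gLt_qm_algebra +
  assumes tight: "tight scale n mul V B"
begin

lemma V_subset_span_V_gens: "V \<subseteq> span (V_gens B)"
proof -
  let ?G = "{mul es | es. length es = n \<and> set es \<subseteq> B \<and>
    mu_map scale n mul V B False (Some (hd es)) False (map Some (tl es)) = {None}}"
  have GV: "?G \<subseteq> V"
  proof
    fix y assume "y \<in> ?G"
    then obtain es where es: "y = mul es" "length es = n" "set es \<subseteq> B"
      "mu_map scale n mul V B False (Some (hd es)) False (map Some (tl es)) = {None}" by blast
    have "Some (hd es) # map Some (tl es) = map Some es" using es(2) n_ge_2 by (cases es) auto
    then have a: "a_map scale n mul V B id (map Some es) \<subseteq> {None}"
      using es(4) permutes_id[of "{..<n}"] unfolding mu_map_def by auto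
    have P: "gp id (map (u_of V) (map Some es)) = span {mul es}"
      using gen_prod_id_singletons[OF es(2)] by (simp add: u_of_def comp_def)
    have js: "length (map Some es) = n" "set (map Some es) \<subseteq> idx_set B" using es(2,3) by (auto simp: idx_set_def)
    show "y \<in> V"
    proof (cases "mul es = 0")
      case False
      then have "gp id (map (u_of V) (map Some es)) \<noteq> {0}" using P span_base[of "mul es"] by auto
      then show ?thesis
        using gen_prod_indices_cases[OF permutes_id js] a a_map_eq_Some es(1) P span_base[of "mul es"] by blast
    qed (use es(1) subspace_0[OF subspace_V] in simp)
  qed
  then have "?G \<subseteq> V_gens B" unfolding V_gens_def by blast
  then have "span ?G \<subseteq> span (V_gens B)" by (rule span_mono)
  then show ?thesis using tight span_zero unfolding tight_def by blast
qed

lemma V_gens_in_class: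
  assumes "y \<in> V_gens B" "y \<noteq> 0"
  obtains C where "C \<in> B // connected" "y \<in> V_gens C"
proof -
  obtain es where es: "y = mul es" "length es = n" "set es \<subseteq> B" "mul es \<in> V"
    using assms(1) unfolding V_gens_def by blast
  have "hd es \<in> set es" using es(2) n_ge_2 by (cases es) auto
  then have "hd es \<in> B" using es(3) by blast
  then have C: "connected `` {hd es} \<in> B // connected" "hd es \<in> connected `` {hd es}" using class_of by blast+
  have "set es \<subseteq> connected `` {hd es}"
    using V_product_subset_class[OF es(2,3,4) _ C(1) \<open>hd es \<in> set es\<close> C(2)] assms(2) es(1) by blast
  then show thesis using that[OF C(1)] es unfolding V_gens_def by blast
qed

lemma L_eq_span_ideals: "L = span (\<Union>C\<in>B // connected. ideal_of C)"
proof
  let ?G = "\<Union>C\<in>B // connected. ideal_of C"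
  have "B \<subseteq> ?G" using class_of subset_ideal_of(1) by blast
  moreover have "V_gens B \<subseteq> span ?G"
  proof
    fix y assume "y \<in> V_gens B"
    show "y \<in> span ?G"
    proof (cases "y = 0")
      case False
      then obtain C where "C \<in> B // connected" "y \<in> V_gens C" using V_gens_in_class \<open>y \<in> V_gens B\<close> by blast
      then show ?thesis using subset_ideal_of(2) by (blast intro: span_base)
    qed (simp add: span_zero)
  qed
  ultimately have "span B \<subseteq> span ?G" "V \<subseteq> span ?G"
    using span_mono V_subset_span_V_gens span_minimal[OF _ subspace_span] by blast+
  then show "L \<subseteq> span ?G"
    using L_eq_V_plus_span_B span_add unfolding setsum_def by blast
  show "span ?G \<subseteq> L" using ideal_of_subset_L class_subset_B by (intro span_minimal[OF _ subspace_L]) blast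
qed

text \<open>A product with an argument in the ideal of \<open>C\<close> only depends on the components of the other
  arguments in the ideal of \<open>C\<close>: the components in the ideals of other classes annihilate it.\<close>

lemma mul_mem_subspace_by_ideal_of:
  assumes T: "subspace T" and C: "C \<in> B // connected"
    and zs: "length zs = n" "set zs \<subseteq> L" "p < n" "zs ! p \<in> ideal_of C"
    and H: "\<And>ys. length ys = n \<Longrightarrow> ys ! p = zs ! p \<Longrightarrow> \<forall>q<n. q \<noteq> p \<longrightarrow> ys ! q \<in> ideal_of C \<Longrightarrow> mul ys \<in> T"
  shows "mul zs \<in> T"
proof (rule mul_mem_subspace_by_generators[OF T _ _ zs(1,2), of "\<Union>C\<in>B // connected. ideal_of C" "{..<n} - {p}"])
  show "(\<Union>C\<in>B // connected. ideal_of C) \<subseteq> L" using L_eq_span_ideals span_superset by blast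
  show "\<forall>r\<in>{..<n} - {p}. zs ! r \<in> span (\<Union>C\<in>B // connected. ideal_of C)"
    using zs(1,2) L_eq_span_ideals nth_mem by blast
  fix ys assume ys: "length ys = n" "set ys \<subseteq> L" "\<forall>r<n. r \<notin> {..<n} - {p} \<longrightarrow> ys ! r = zs ! r"
    "\<forall>r\<in>{..<n} - {p}. ys ! r \<in> (\<Union>C\<in>B // connected. ideal_of C)"
  have yp: "ys ! p = zs ! p" using ys(3) zs(3) by blast
  show "mul ys \<in> T"
  proof (cases "\<exists>r<n. r \<noteq> p \<and> ys ! r \<notin> ideal_of C")
    case True
    then obtain r C' where r: "r < n" "r \<noteq> p" "C' \<in> B // connected" "ys ! r \<in> ideal_of C'" "C' \<noteq> C"
      using ys(4) by blast
    then have "mul ys = 0"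
      using mul_eq_0_distinct_classes[OF C r(3) r(5)[symmetric] ys(1,2) zs(3) r(1) r(2)[symmetric]] yp zs(4)
      by simp
    then show ?thesis using subspace_0[OF T] by simp
  qed (use H ys(1) yp in blast)
qed blast

lemma gLt_ideal_of_ideal_of_mul_mem:
  assumes C: "C \<in> B // connected" and I: "gLt_ideal scale n mul (ideal_of C) Lg I"
    and zs: "length zs = n" "set zs \<subseteq> L" "p < n" "zs ! p \<in> I"
  shows "mul zs \<in> I"
proof -
  have IC: "I \<subseteq> ideal_of C" and sub: "subspace I"
    using I by (auto simp: gLt_ideal_def graded_subspace_def)
  show ?thesis
  proof (rule mul_mem_subspace_by_ideal_of[OF sub C zs(1-3)])
    show "zs ! p \<in> ideal_of C" using IC zs(4) by blast
    fix ys assume "length ys = n" "ys ! p = zs ! p" "\<forall>q<n. q \<noteq> p \<longrightarrow> ys ! q \<in> ideal_of C"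
    then show "mul ys \<in> I" using gLt_ideal_mul_mem[OF I _ zs(3)] zs(4) by simp
  qed
qed

lemma gLt_ideal_of_ideal_of_linked:
  assumes C: "C \<in> B // connected" and I: "gLt_ideal scale n mul (ideal_of C) Lg I"
    and y: "y \<in> I" and linked: "linked y z \<or> linked z y"
  shows "z \<in> I"
  using linked
proof
  assume "linked y z"
  then obtain zs s where zs: "length zs = n" "set zs \<subseteq> B \<union> V" "y \<in> set zs" "s \<noteq> 0" "mul zs = s *s z"
    unfolding linked_def by blast
  obtain p where p: "p < n" "zs ! p = y" using zs(1,3) by (metis in_set_conv_nth)
  have "set zs \<subseteq> L" using zs(2) B_subset_L V_subset_L by blast
  then have "mul zs \<in> I" using gLt_ideal_of_ideal_of_mul_mem[OF C I zs(1) _ p(1)] p(2) y by simp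
  then show "z \<in> I"
    using mem_subspace_scale_cancel I zs(4,5) by (auto simp: gLt_ideal_def graded_subspace_def)
next
  assume "linked z y"
  then have zB: "z \<in> B" and yB: "y \<in> B" unfolding linked_def by blast+
  obtain \<sigma> ks where \<sigma>: "\<sigma> permutes {..<n}" and ks: "length ks = n - 1" "set ks \<subseteq> idx_set B"
    and a: "a_map scale n mul V B \<sigma> (Some z # ks) = {Some y}"
    using linked_a_map[OF \<open>linked z y\<close>] by blast
  have "Some z \<in> b_map scale n mul V B \<sigma> (Some y) ks" using a zB by (simp add: b_map_def idx_set_def)
  then have "Some z \<in> mu_map scale n mul V B False (Some y) True ks" using \<sigma> by (auto simp: mu_map_def)
  moreover have "Some y \<in> idx_set B" using yB by (simp add: idx_set_def)
  ultimately obtain \<sigma>' where \<sigma>': "\<sigma>' permutes {..<n}" "z \<in> gp \<sigma>' (map (u_of V) (Some y # ks))"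
    using mu_quasi_multD[OF zB _ ks(2,1)] by blast
  have js: "length (Some y # ks) = n" "set (Some y # ks) \<subseteq> idx_set B"
    using ks n_ge_2 \<open>Some y \<in> idx_set B\<close> by auto
  have "gp \<sigma>' (map (u_of V) (Some y # ks)) \<subseteq> I"
  proof (rule gen_prod_subset[OF \<sigma>'(1)])
    show "subspace I" using I by (auto simp: gLt_ideal_def graded_subspace_def)
    fix zs assume zs: "length zs = n" "\<forall>p<n. zs ! p \<in> map (u_of V) (Some y # ks) ! \<sigma>' p"
    have "set zs \<subseteq> L" "zs ! inv \<sigma>' 0 = y"
      using gen_prod_indices_generator(1)[OF \<sigma>'(1) js zs] gen_prod_indices_generator(2)[OF \<sigma>'(1) js zs, of 0 y]
        n_ge_2 B_subset_L V_subset_L by auto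
    then show "mul zs \<in> I"
      using gLt_ideal_of_ideal_of_mul_mem[OF C I zs(1)] permutes_inv_less[OF \<sigma>'(1), of 0] n_ge_2 y by auto
  qed
  then show "z \<in> I" using \<sigma>'(2) by blast
qed

lemma class_subset_gLt_ideal_of_ideal_of:
  assumes C: "C \<in> B // connected" and I: "gLt_ideal scale n mul (ideal_of C) Lg I"
    and c0: "c0 \<in> C" "c0 \<in> I"
  shows "C \<subseteq> I"
proof
  fix c assume "c \<in> C"
  then have "(c0, c) \<in> ({(x, y). linked x y} \<union> {(x, y). linked x y}\<inverse>)\<^sup>*"
    using class_connected[OF C c0(1)] by (simp add: connected_def)
  then show "c \<in> I"
  proof (induction rule: rtrancl_induct)
    case (step y z)
    then show ?case using gLt_ideal_of_ideal_of_linked[OF C I] by blast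
  qed (rule c0(2))
qed

lemma minimal_ideal_of:
  assumes C: "C \<in> B // connected"
  shows "minimal_alg scale n mul (ideal_of C) Lg (V_of C) C"
  unfolding minimal_alg_def
proof (intro allI impI)
  fix I VI BI assume I: "gLt_ideal scale n mul (ideal_of C) Lg I"
    and inh: "inherited_basis scale Lg (V_of C) C I VI BI"
  have IC: "I \<subseteq> ideal_of C" and "subspace I" using I by (auto simp: gLt_ideal_def graded_subspace_def)
  obtain c0 where c0: "c0 \<in> BI" "c0 \<in> C" using inh unfolding inherited_basis_def by blast
  have "I = setsum VI (span BI)" "subspace VI"
    using inh unfolding inherited_basis_def graded_subspace_def by blast+
  then have "c0 \<in> I"
    using c0(1) span_base[of c0 BI] subspace_0[of VI] unfolding setsum_def by force
  then have CI: "C \<subseteq> I" by (rule class_subset_gLt_ideal_of_ideal_of[OF C I c0(2)])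
  have "V_gens C \<subseteq> I"
  proof
    fix x assume "x \<in> V_gens C"
    then obtain es where es: "x = mul es" "length es = n" "set es \<subseteq> C" "set es \<subseteq> L"
      using V_gens_product[OF C] by metis
    have "es ! 0 \<in> set es" using es(2) n_ge_2 by simp
    then show "x \<in> I"
      using gLt_ideal_of_ideal_of_mul_mem[OF C I es(2,4), of 0] CI es(1,3) n_ge_2 by auto
  qed
  then have "ideal_of C \<subseteq> I"
    unfolding ideal_of_eq_span using CI span_minimal[OF _ \<open>subspace I\<close>] by blast
  then show "I = ideal_of C" using IC by blast
qed

lemma mul_eq_0_V_gens_outside_class:
  assumes C: "C \<in> B // connected" and ys: "length ys = n" "set ys \<subseteq> L"
    and p: "p < n" "ys ! p \<in> ideal_of C"
    and r: "r < n" "r \<noteq> p" "ys ! r \<in> V_gens B" "ys ! r \<notin> V_of C"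
  shows "mul ys = 0"
proof (cases "ys ! r = 0")
  case False
  then obtain C' where C': "C' \<in> B // connected" "ys ! r \<in> V_gens C'" using V_gens_in_class r(3) by blast
  then have "C' \<noteq> C" using r(4) span_base unfolding V_of_def by blast
  then show ?thesis
    using mul_eq_0_distinct_classes[OF C C'(1) _ ys p(1) r(1) r(2)[symmetric] p(2)] C'(2) subset_ideal_of(2)
    by blast
qed (use mul_eq_0_if_nth_0[OF ys r(1)] in simp)

text \<open>In a product with a basis element of \<open>C\<close> as an argument, the arguments from \<open>V\<close> may be
  replaced by their components in \<open>V_of C\<close>: \<open>V\<close> is spanned by the products of basis elements in
  \<open>V\<close> (tightness), and those of other classes annihilate the product.\<close>

lemma mul_mem_gen_prod_V_of:
  assumes C: "C \<in> B // connected" and \<sigma>: "\<sigma> permutes {..<n}"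
    and js: "length js = n" "set js \<subseteq> idx_set C" "Some c \<in> set js"
    and zs: "length zs = n" "\<forall>p<n. zs ! p \<in> map (u_of V) js ! \<sigma> p"
  shows "mul zs \<in> gp \<sigma> (map (u_of (V_of C)) js)"
proof -
  have jsB: "set js \<subseteq> idx_set B" using js(2) class_subset_B[OF C] by (auto simp: idx_set_def)
  have zsq: "zs ! q \<in> u_of V (js ! \<sigma> q)" if "q < n" for q
    using zs(2) that permutes_less[OF \<sigma> that] js(1) by auto
  define Q where "Q = {q. q < n \<and> js ! \<sigma> q = None}"
  obtain i where i: "i < n" "js ! i = Some c" using js(1,3) by (metis in_set_conv_nth)
  define qc where "qc = inv \<sigma> i"
  have qc: "qc < n" "qc \<notin> Q" "zs ! qc = c" "c \<in> ideal_of C"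
    using permutes_inv_less[OF \<sigma> i(1)] i js(2,3) gen_prod_indices_generator(2)[OF \<sigma> js(1) jsB zs i]
      subset_ideal_of(1) by (auto simp: qc_def Q_def idx_set_def)
  show ?thesis
  proof (rule mul_mem_subspace_by_generators[OF subspace_gen_prod _ _ zs(1), of "V_gens B" Q])
    show "V_gens B \<subseteq> L" "Q \<subseteq> {..<n}" using V_gens_subset_V V_subset_L by (auto simp: Q_def)
    show "set zs \<subseteq> L" using gen_prod_indices_generator(1)[OF \<sigma> js(1) jsB zs] B_subset_L V_subset_L by blast
    show "\<forall>r\<in>Q. zs ! r \<in> span (V_gens B)"
    proof
      fix r assume "r \<in> Q"
      then have "zs ! r \<in> V" using zsq[of r] by (simp add: Q_def u_of_def)
      then show "zs ! r \<in> span (V_gens B)" using V_subset_span_V_gens by blast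
    qed
    fix ys assume ys: "length ys = n" "set ys \<subseteq> L" "\<forall>r<n. r \<notin> Q \<longrightarrow> ys ! r = zs ! r"
      "\<forall>r\<in>Q. ys ! r \<in> V_gens B"
    show "mul ys \<in> gp \<sigma> (map (u_of (V_of C)) js)"
    proof (cases "\<exists>r\<in>Q. ys ! r \<notin> V_of C")
      case True
      then obtain r where "r \<in> Q" "ys ! r \<notin> V_of C" by blast
      moreover from this have "r < n" "r \<noteq> qc" using qc(2) by (auto simp: Q_def)
      ultimately have "mul ys = 0"
        using mul_eq_0_V_gens_outside_class[OF C ys(1,2) qc(1)] ys(3,4) qc by auto
      then show ?thesis using subspace_0[OF subspace_gen_prod] by simp
    next
      case False
      have "ys ! q \<in> map (u_of (V_of C)) js ! \<sigma> q" if q: "q < n" for q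
      proof (cases "q \<in> Q")
        case True
        then show ?thesis using False q permutes_less[OF \<sigma> q] js(1) by (auto simp: Q_def u_of_def)
      next
        case nQ: False
        then obtain b where b: "js ! \<sigma> q = Some b" using q by (auto simp: Q_def)
        then have "ys ! q = b" using ys(3) zsq[OF q] q nQ by (simp add: u_of_def)
        then show ?thesis using b permutes_less[OF \<sigma> q] js(1) by (simp add: u_of_def)
      qed
      then show ?thesis using mul_mem_gen_prod[OF \<sigma> ys(1)] by blast
    qed
  qed
qed

lemma gen_prod_V_of_eq:
  assumes C: "C \<in> B // connected" and \<sigma>: "\<sigma> permutes {..<n}"
    and js: "length js = n" "set js \<subseteq> idx_set C" "Some c \<in> set js"
  shows "gp \<sigma> (map (u_of (V_of C)) js) = gp \<sigma> (map (u_of V) js)"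
proof
  show "gp \<sigma> (map (u_of (V_of C)) js) \<subseteq> gp \<sigma> (map (u_of V) js)"
    using js(1) V_of_subset_V by (intro gen_prod_mono[OF \<sigma>]) (auto simp: u_of_def split: option.splits)
  show "gp \<sigma> (map (u_of V) js) \<subseteq> gp \<sigma> (map (u_of (V_of C)) js)"
    by (rule gen_prod_subset[OF \<sigma> subspace_gen_prod]) (rule mul_mem_gen_prod_V_of[OF assms])
qed

lemma a_map_class_eq:
  assumes C: "C \<in> B // connected" and \<sigma>: "\<sigma> permutes {..<n}"
    and js: "length js = n" "set js \<subseteq> idx_set C" "Some c \<in> set js"
  shows "a_map scale n mul (V_of C) C \<sigma> js = a_map scale n mul V B \<sigma> js"
proof -
  let ?P = "gp \<sigma> (map (u_of V) js)"
  have CB: "C \<subseteq> B" by (rule class_subset_B[OF C])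
  have PC: "?P \<subseteq> ideal_of C" by (rule gen_prod_indices_subset_ideal_of[OF C \<sigma> js])
  have "r \<in> C \<and> ?P \<noteq> {0} \<and> ?P \<subseteq> line scale r \<longleftrightarrow> r \<in> B \<and> ?P \<noteq> {0} \<and> ?P \<subseteq> line scale r" for r
    using CB nonzero_subspace_of_line_contains[OF subspace_gen_prod] PC ideal_of_inter_B[OF CB] by blast
  moreover have "?P \<subseteq> V_of C \<longleftrightarrow> ?P \<subseteq> V" using V_of_subset_V ideal_of_inter_V[OF CB] PC by blast
  ultimately show ?thesis unfolding a_map_def Let_def gen_prod_V_of_eq[OF assms] by auto
qed

lemma b_map_class_eq:
  assumes C: "C \<in> B // connected" and \<sigma>: "\<sigma> permutes {..<n}"
    and e: "e \<in> C" and rest: "length rest = n - 1" "set rest \<subseteq> idx_set C"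
  shows "Some e \<in> b_map scale n mul (V_of C) C \<sigma> j rest \<longleftrightarrow> Some e \<in> b_map scale n mul V B \<sigma> j rest"
proof -
  have "length (Some e # rest) = n" "set (Some e # rest) \<subseteq> idx_set C"
    using rest e n_ge_2 by (auto simp: idx_set_def)
  then have "a_map scale n mul (V_of C) C \<sigma> (Some e # rest) = a_map scale n mul V B \<sigma> (Some e # rest)"
    by (rule a_map_class_eq[OF C \<sigma>, where c = e]) simp
  moreover have "Some e \<in> idx_set C" "Some e \<in> idx_set B" using e class_subset_B[OF C] by (auto simp: idx_set_def)
  ultimately show ?thesis by (simp add: b_map_def)
qed

lemma mu_map_class_barred:
  assumes C: "C \<in> B // connected" and e: "e \<in> C"
    and ks: "k1 \<in> idx_set C" "set ks \<subseteq> idx_set C" "length ks = n - 1" and "b1 \<or> b2"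
    and mu: "Some e \<in> mu_map scale n mul (V_of C) C b1 k1 b2 ks"
  shows "Some e \<in> mu_map scale n mul V B b1 k1 b2 ks"
proof -
  have "length (k1 # take k ks @ drop (Suc k) ks) = n - 1" "set (k1 # take k ks @ drop (Suc k) ks) \<subseteq> idx_set C"
    if "k < n - 1" for k
    using that ks set_delete_list[of k ks] n_ge_2 by auto
  then show ?thesis
    using mu \<open>b1 \<or> b2\<close> b_map_class_eq[OF C _ e] ks by (cases b1; cases b2) (auto simp: mu_map_def)
qed

lemma mu_quasi_mult_ideal_of:
  assumes C: "C \<in> B // connected"
  shows "mu_quasi_mult scale n mul (V_of C) C"
  unfolding mu_quasi_mult_def
proof (intro ballI allI impI)
  fix e b1 k1 b2 ks
  assume e: "e \<in> C" and ks: "k1 \<in> idx_set C" "set ks \<subseteq> idx_set C" "length ks = n - 1"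
    and mu: "Some e \<in> mu_map scale n mul (V_of C) C b1 k1 b2 ks"
  have eB: "e \<in> B" using e class_subset_B[OF C] by blast
  have js: "length (k1 # ks) = n" "set (k1 # ks) \<subseteq> idx_set C" using ks n_ge_2 by auto
  show "\<exists>\<sigma>. \<sigma> permutes {..<n} \<and> e \<in> gp \<sigma> (map (u_of (V_of C)) (k1 # ks))"
  proof (cases "b1 \<or> b2")
    case False
    then obtain \<sigma> where \<sigma>: "\<sigma> permutes {..<n}" "Some e \<in> a_map scale n mul (V_of C) C \<sigma> (k1 # ks)"
      using mu by (auto simp: mu_map_def)
    then have "gp \<sigma> (map (u_of (V_of C)) (k1 # ks)) \<noteq> {0}" "gp \<sigma> (map (u_of (V_of C)) (k1 # ks)) \<subseteq> line scale e"
      unfolding a_map_def Let_def by auto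
    then show ?thesis using nonzero_subspace_of_line_contains[OF subspace_gen_prod] \<sigma>(1) by blast
  next
    case True
    then have mu': "Some e \<in> mu_map scale n mul V B b1 k1 b2 ks"
      by (rule mu_map_class_barred[OF C e ks _ mu])
    then obtain c where c: "Some c \<in> set (k1 # ks)"
      using Some_notin_mu_map_None[OF eB True _ ks(3)] by (metis not_None_eq singletonI subsetI)
    have "set (k1 # ks) \<subseteq> idx_set B" using js(2) class_subset_B[OF C] by (auto simp: idx_set_def)
    then obtain \<sigma> where "\<sigma> permutes {..<n}" "e \<in> gp \<sigma> (map (u_of V) (k1 # ks))"
      using mu_quasi_multD[OF eB _ _ ks(3) mu'] by auto
    then show ?thesis using gen_prod_V_of_eq[OF C _ js c] by blast
  qed
qed

text \<open>In a vanishing sum of elements of the \<open>V_of C\<close> for distinct classes, each summand is central: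
  against arguments from its own ideal it acts like the whole sum, and the ideals of the other
  classes annihilate it.\<close>

lemma V_of_sum_eq_0_central:
  assumes fin: "finite \<C>" and \<C>: "\<C> \<subseteq> B // connected" and v: "\<forall>C\<in>\<C>. v C \<in> V_of C"
    and sum: "(\<Sum>C\<in>\<C>. v C) = 0" and C0: "C0 \<in> \<C>"
  shows "v C0 \<in> center scale n mul L"
proof (rule mem_centerI)
  have C0': "C0 \<in> B // connected" using C0 \<C> by blast
  have vL: "v C \<in> L" if "C \<in> \<C>" for C using v that V_of_subset_V V_subset_L by blast
  show "0 < n" "v C0 \<in> L" using n_ge_2 vL[OF C0] by auto
  fix zs q assume zs: "length zs = n" "q < n" "zs ! q = v C0" "\<forall>r<n. r \<noteq> q \<longrightarrow> zs ! r \<in> L"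
  have "set zs \<subseteq> L"
  proof
    fix y assume "y \<in> set zs"
    then obtain r where "r < n" "y = zs ! r" using zs(1) by (auto simp: in_set_conv_nth)
    then show "y \<in> L" using zs(3,4) vL[OF C0] by (cases "r = q") auto
  qed
  have "mul zs \<in> {0}"
  proof (rule mul_mem_subspace_by_ideal_of[OF subspace_single_0 C0' zs(1) \<open>set zs \<subseteq> L\<close> zs(2)])
    show "zs ! q \<in> ideal_of C0" unfolding zs(3) using v C0 subset_ideal_of(4) by blast
    fix ys assume ys: "length ys = n" "ys ! q = zs ! q" "\<forall>r<n. r \<noteq> q \<longrightarrow> ys ! r \<in> ideal_of C0"
    have "set ys \<subseteq> L"
    proof
      fix y assume "y \<in> set ys"
      then obtain r where "r < n" "y = ys ! r" using ys(1) by (auto simp: in_set_conv_nth)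
      then show "y \<in> L"
        using ys(2,3) zs(3) vL[OF C0] ideal_of_subset_L[OF class_subset_B[OF C0']] by (cases "r = q") auto
    qed
    define r :: nat where "r = (if q = 0 then 1 else 0)"
    have r: "r < n" "r \<noteq> q" using n_ge_2 by (auto simp: r_def)
    have other: "mul (ys[q := v C]) = 0" if "C \<in> \<C> - {C0}" for C
    proof (rule mul_eq_0_distinct_classes[OF _ C0' _ _ _ zs(2) r(1) r(2)[symmetric]])
      show "C \<in> B // connected" "C \<noteq> C0" using that \<C> by auto
      show "length (ys[q := v C]) = n" "set (ys[q := v C]) \<subseteq> L"
        using ys(1) set_update_subset_L[OF \<open>set ys \<subseteq> L\<close> vL] that by auto
      show "ys[q := v C] ! q \<in> ideal_of C" using ys(1) zs(2) v that subset_ideal_of(4) by auto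
      show "ys[q := v C] ! r \<in> ideal_of C0" using ys(3) r by simp
    qed
    have "0 = mul (ys[q := (\<Sum>C\<in>\<C>. v C)])" using sum mul_update_zero[OF ys(1) \<open>set ys \<subseteq> L\<close> zs(2)] by simp
    also have "\<dots> = (\<Sum>C\<in>\<C>. mul (ys[q := v C]))" using mul_update_sum[OF fin ys(1) \<open>set ys \<subseteq> L\<close> zs(2)] vL by blast
    also have "\<dots> = mul (ys[q := v C0]) + (\<Sum>C\<in>\<C> - {C0}. mul (ys[q := v C]))"
      by (rule sum.remove[OF fin C0])
    also have "\<dots> = mul (ys[q := v C0])" using other by simp
    also have "\<dots> = mul ys" using ys(2) zs(3) list_update_id[of ys q] by simp
    finally show "mul ys \<in> {0}" by simp
  qed
  then show "mul zs = 0" by simp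
qed

lemma ideal_of_sum_eq_0:
  assumes centerless: "center scale n mul L = {0}"
    and fin: "finite \<C>" and \<C>: "\<C> \<subseteq> B // connected" and x: "\<forall>C\<in>\<C>. x C \<in> ideal_of C"
    and sum: "(\<Sum>C\<in>\<C>. x C) = 0" and C0: "C0 \<in> \<C>"
  shows "x C0 = 0"
proof -
  have CB: "C \<subseteq> B" if "C \<in> \<C>" for C using that \<C> class_subset_B by blast
  have "\<forall>C\<in>\<C>. \<exists>p. x C = fst p + snd p \<and> fst p \<in> V_of C \<and> snd p \<in> span C"
    using x unfolding ideal_of_def setsum_def by fastforce
  then have "\<exists>f. \<forall>C\<in>\<C>. x C = fst (f C) + snd (f C) \<and> fst (f C) \<in> V_of C \<and> snd (f C) \<in> span C"
    by (rule bchoice)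
  then obtain f where f: "\<forall>C\<in>\<C>. x C = fst (f C) + snd (f C) \<and> fst (f C) \<in> V_of C \<and> snd (f C) \<in> span C"
    by blast
  define v where "v = fst \<circ> f"
  define w where "w = snd \<circ> f"
  have vw: "\<forall>C\<in>\<C>. x C = v C + w C \<and> v C \<in> V_of C \<and> w C \<in> span C" using f by (simp add: v_def w_def)
  have "(\<Sum>C\<in>\<C>. v C) \<in> V" using vw V_of_subset_V by (intro subspace_sum[OF subspace_V]) blast
  moreover have "(\<Sum>C\<in>\<C>. w C) \<in> span B" using vw span_mono[OF CB] by (intro span_sum) blast
  moreover have "(\<Sum>C\<in>\<C>. v C) + (\<Sum>C\<in>\<C>. w C) = 0" using sum vw by (simp add: sum.distrib[symmetric])
  then have "(\<Sum>C\<in>\<C>. w C) = - (\<Sum>C\<in>\<C>. v C)" by (simp add: eq_neg_iff_add_eq_0 add.commute)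
  ultimately have "(\<Sum>C\<in>\<C>. w C) \<in> V \<inter> span B" using subspace_neg[OF subspace_V] by auto
  then have sw: "(\<Sum>C\<in>\<C>. w C) = 0" using V_inter_span_B by blast
  then have sv: "(\<Sum>C\<in>\<C>. v C) = 0" using \<open>(\<Sum>C\<in>\<C>. v C) + (\<Sum>C\<in>\<C>. w C) = 0\<close> by simp
  have "v C0 = 0"
    using V_of_sum_eq_0_central[OF fin \<C> _ sv C0] vw centerless by blast
  moreover have "w C0 = 0"
  proof (rule span_disjoint_subsets_B[OF CB[OF C0]])
    show "\<Union>(\<C> - {C0}) \<subseteq> B" using CB by blast
    show "C0 \<inter> \<Union>(\<C> - {C0}) = {}" using classes_disjoint C0 \<C> by blast
    show "w C0 \<in> span C0" using vw C0 by blast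
    have "w C0 + (\<Sum>C\<in>\<C> - {C0}. w C) = 0" using sw sum.remove[OF fin C0, of w] by simp
    then have "w C0 = - (\<Sum>C\<in>\<C> - {C0}. w C)" by (simp add: eq_neg_iff_add_eq_0)
    moreover have "(\<Sum>C\<in>\<C> - {C0}. w C) \<in> span (\<Union>(\<C> - {C0}))"
      using vw span_mono[of _ "\<Union>(\<C> - {C0})"] by (intro span_sum) blast
    ultimately show "w C0 \<in> span (\<Union>(\<C> - {C0}))" using span_neg by simp
  qed
  ultimately show ?thesis using vw C0 by simp
qed

lemma is_direct_sum_ideals:
  assumes centerless: "center scale n mul L = {0}"
  shows "is_direct_sum scale L ((\<lambda>C. (ideal_of C, V_of C, C)) ` (B // connected))"
  unfolding is_direct_sum_def
proof (intro conjI allI impI)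
  let ?f = "\<lambda>C. (ideal_of C, V_of C, C)"
  show "L = span (\<Union>t\<in>?f ` (B // connected). fst t)" using L_eq_span_ideals by simp
  fix T x assume T: "finite T" "T \<subseteq> ?f ` (B // connected)" "\<forall>t\<in>T. x t \<in> fst t" "sum x T = 0"
  obtain \<C> where \<C>: "\<C> \<subseteq> B // connected" "T = ?f ` \<C>" using T(2) by (meson subset_image_iff)
  have inj: "inj_on ?f \<C>" by (rule inj_onI) simp
  have fin: "finite \<C>" using T(1) \<C>(2) finite_image_iff[OF inj] by simp
  have "\<forall>C\<in>\<C>. (x \<circ> ?f) C = 0"
    using ideal_of_sum_eq_0[OF centerless fin \<C>(1), of "x \<circ> ?f"] T(3,4) \<C>(2) sum.reindex[OF inj, of x]
    by auto
  then show "\<forall>t\<in>T. x t = 0" using \<C>(2) by auto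
qed

end

theorem theorem4p4:
  fixes scale :: "'f::field \<Rightarrow> 'v::ab_group_add \<Rightarrow> 'v"
    and n :: nat
    and mul :: "'v list \<Rightarrow> 'v"
    and eps :: "'g::ab_group_add \<Rightarrow> 'g \<Rightarrow> 'f"
    and L V B :: "'v set"
    and Lg :: "'g \<Rightarrow> 'v set"
  assumes "vector_space scale"
    and "n \<ge> 2"
    and "bicharacter eps"
    and "color_gLt_algebra scale n mul eps L Lg"
    and "quasi_mult_basis scale n mul L Lg V B"
    and "mu_quasi_mult scale n mul V B"
    and "center scale n mul L = {0}"
    and "tight scale n mul V B"
  shows "\<exists>Fam :: ('v set \<times> 'v set \<times> 'v set) set.
           is_direct_sum scale L Fam \<and>
           (\<forall>(S, VS, BS) \<in> Fam.
              gLt_ideal scale n mul L Lg S \<and>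
              inherited_basis scale Lg V B S VS BS \<and>
              quasi_mult_basis scale n mul S Lg VS BS \<and>
              minimal_alg scale n mul S Lg VS BS \<and>
              mu_quasi_mult scale n mul VS BS)"
proof -
  have "graded_nary_algebra scale n mul L Lg" using assms(4) by (simp add: color_gLt_algebra_def)
  then interpret tight_gLt_qm_algebra scale n mul L Lg eps V B
    using assms by (simp add: tight_gLt_qm_algebra_def tight_gLt_qm_algebra_axioms_def
      gLt_qm_algebra_def gLt_qm_algebra_axioms_def gLt_algebra_def gLt_algebra_axioms_def
      qm_algebra_def qm_algebra_axioms_def nary_algebra_def nary_algebra_axioms_def)
  show ?thesis
    using is_direct_sum_ideals[OF assms(7)] gLt_ideal_ideal_of inherited_basis_ideal_of
      quasi_mult_basis_ideal_of minimal_ideal_of mu_quasi_mult_ideal_of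
    by (intro exI[of _ "(\<lambda>C. (ideal_of C, V_of C, C)) ` (B // connected)"]) auto
qed

end
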